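(* In the setting of the context, if $\|D\|<\min\{r_{\mathbb R}(A),\mu_Z(A)\}$ and there is no real eigenvector $v$ of $(A+D)^\top$ satisfying $v^\top z\le0$ for all $z\in\mathcal Z$, then the malfunctioning network $\dot X=(A+D)X+Bu+Cw_N$ is resiliently stabilizable.
   Context: Network of $N$ linear subsystems $\dot x_i=A_ix_i+\bar B_i\bar u_i+\sum_{k\in\mathcal N_i}D_{i,k}x_k$, $x_i\in\mathbb{R}^{n_i}$, $\bar u_i(t)\in\bar{\mathcal U}_i=[-1,1]^{m_i}$, $\mathcal N_i\subseteq\{1,\dots,N\}\setminus\{i\}$; $n_\Sigma=\sum n_i$, $X=(x_1,\dots,x_N)$, $A=\mathrm{diag}(A_1,\dots,A_N)$, $D=(D_{i,j})$ block matrix with zero diagonal blocks and $D_{i,k}=0$ for $k\notin\mathcal N_i$, $D\ne0$. Subsystem $N$ has lost control of $p_N\in\{1,\dots,m_N\}$ actuators: $\bar B_N$ is split into $B_N\in\mathbb{R}^{n_N\times(m_N-p_N)}$ and $C_N\in\mathbb{R}^{n_N\times p_N}$, $\mathcal U_N=[-1,1]^{m_N-p_N}$, $\mathcal W_N=[-1,1]^{p_N}$. Malfunctioning network: $\dot X=(A+D)X+Bu+Cw_N$ with $B=\mathrm{diag}(\bar B_1,\dots,\bar B_{N-1},B_N)$, $C=\begin{pmatrix}0\\C_N\end{pmatrix}$, $u(t)\in\mathcal U=\bar{\mathcal U}_1\times\cdots\times\bar{\mathcal U}_{N-1}\times\mathcal U_N$, $w_N(t)\in\mathcal W_N$. $\mathcal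 Z:=B\mathcal U\ominus(-C\mathcal W_N)=\{z\in\mathbb{R}^{n_\Sigma}:z-Cw\in B\mathcal U\ \forall w\in\mathcal W_N\}$, $r_\Sigma=\dim\mathcal Z$, and $Z\in\mathbb{R}^{n_\Sigma\times r_\Sigma}$ is a matrix with $\mathrm{Im}(Z)=\mathrm{span}(\mathcal Z)$. $\mu_Z(A):=\min\{\|\Delta A\|:(A+\Delta A,Z)\text{ uncontrollable}\}$; $r_{\mathbb R}(A)=\inf\{\|D'\|:D'\text{ real}, A+D'\text{ has an eigenvalue with positive real part}\}$. A tuple $(M,G,H,\mathcal U,\mathcal W)$ (system $\dot x=Mx+Gu+Hw$) is resiliently stabilizable if for every $x(0)$ and every $w:[0,\infty)\to\mathcal W$ there exist $T\ge0$ and $u:[0,\infty)\to\mathcal U$, with $u(t)$ depending only on $w(t)$, such that the solution exists, is unique and $x(T)=0$. The malfunctioning network is resiliently stabilizable if $(A+D,B,C,\mathcal U,\mathcal W_N)$ is. *)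

theory Defs
  imports "HOL-Analysis.Analysis" "HOL-Library.Extended_Real"
begin

definition mat_norm :: "real^'n^'m \<Rightarrow> real" where
  "mat_norm M = onorm (\<lambda>x. M *v x)"

definition cmat :: "real^'n^'m \<Rightarrow> complex^'n^'m" where
  "cmat M = (\<chi> i j. complex_of_real (M$i$j))"

text \<open>Pair (M, Z) controllable (Kalman rank condition), where the matrix Z is
  given through its column space V = Im Z:
  span of the columns of [Z, MZ, ..., M^(n-1) Z] is the whole space.\<close>
definition kalman_controllable :: "real^'n^'n \<Rightarrow> (real^'n) set \<Rightarrow> bool" where
  "kalman_controllable M V \<longleftrightarrow>
     span (\<Union>k\<in>{..<CARD('n)}. ((\<lambda>x. M *v x) ^^ k) ` V) = UNIV"

text \<open>mu_Z(A) = min { ||Delta A|| : (A + Delta A, Z) uncontrollable } (infimum, +oo if empty),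
  with V = Im Z.\<close>
definition mu_Z :: "real^'n^'n \<Rightarrow> (real^'n) set \<Rightarrow> ereal" where
  "mu_Z A V = Inf {ereal (mat_norm DA) | DA. \<not> kalman_controllable (A + DA) V}"

definition r_R :: "real^'n^'n \<Rightarrow> ereal" where
  "r_R A = Inf {ereal (mat_norm D') | D'.
      \<exists>c::complex. \<exists>v::complex^'n. v \<noteq> 0 \<and> cmat (A + D') *v v = (\<chi> i. c * v$i) \<and> Re c > 0}"

text \<open>Minkowski (Pontryagin) difference  G U \<ominus> (-H W).\<close>
definition minkowski_Z :: "real^'u^'n \<Rightarrow> real^'w^'n \<Rightarrow> (real^'u) set \<Rightarrow> (real^'w) set \<Rightarrow> (real^'n) set" where
  "minkowski_Z G H U W = {z. \<forall>w\<in>W. z - H *v w \<in> (\<lambda>u. G *v u) ` U}"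

text \<open>(Caratheodory) solution of x' = M x + G u(t) + H w(t), x(0) = x0 on [0, oo),
  in integral form.\<close>
definition is_solution ::
  "real^'n^'n \<Rightarrow> real^'u^'n \<Rightarrow> real^'w^'n \<Rightarrow> (real \<Rightarrow> real^'u) \<Rightarrow> (real \<Rightarrow> real^'w)
     \<Rightarrow> real^'n \<Rightarrow> (real \<Rightarrow> real^'n) \<Rightarrow> bool" where
  "is_solution M G H u w x0 x \<longleftrightarrow>
     (\<forall>t\<ge>0. ((\<lambda>s. M *v x s + G *v u s + H *v w s) has_integral (x t - x0)) {0..t})"

text \<open>Resilient stabilizability of (M, G, H, U, W): for every initial state there is a
  control law u(t) = f(t, w(t)) (u(t) depends only on the current value w(t)) such that
  for every undesired input w : [0,oo) -> W the solution exists, is unique and reaches 0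
  at some time T \<ge> 0.\<close>
definition resiliently_stabilizable ::
  "real^'n^'n \<Rightarrow> real^'u^'n \<Rightarrow> real^'w^'n \<Rightarrow> (real^'u) set \<Rightarrow> (real^'w) set \<Rightarrow> bool" where
  "resiliently_stabilizable M G H U W \<longleftrightarrow>
     (\<forall>x0. \<exists>f :: real \<Rightarrow> real^'w \<Rightarrow> real^'u.
        (\<forall>t\<ge>0. \<forall>w\<in>W. f t w \<in> U) \<and>
        (\<forall>w. (\<forall>t\<ge>0. w t \<in> W) \<longrightarrow>
           (\<exists>T\<ge>0. \<exists>x. is_solution M G H (\<lambda>t. f t (w t)) w x0 x
               \<and> (\<forall>y. is_solution M G H (\<lambda>t. f t (w t)) w x0 y \<longrightarrow> (\<forall>t\<ge>0. y t = x t))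
               \<and> x T = 0)))"

end

theory Submission
  imports Defs "Jordan_Normal_Form.Spectral_Radius"
begin

text \<open>The bound \<open>\<parallel>D\<parallel> < r\<^sub>\<real>(A)\<close> keeps all eigenvalues of \<open>A + D\<close> in a half plane \<open>Re \<lambda> \<le> -s\<close>, and
  \<open>\<parallel>D\<parallel> < \<mu>\<^sub>Z(A)\<close> keeps \<open>(A + D, span \<Z>)\<close> controllable. Since \<open>U\<close> and \<open>W\<close> are symmetric and \<open>U\<close> is
  convex, \<open>\<Z>\<close> is convex and symmetric, so it contains a ball of \<open>span \<Z>\<close> around \<open>0\<close>. The free motion
  brings any state close to \<open>0\<close>, and from there controllability steers it to \<open>0\<close> with a control
  \<open>z(t) \<in> span \<Z>\<close> small enough to lie in \<open>\<Z>\<close>. The feedback then chooses \<open>u(t) \<in> U\<close> with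
  \<open>B u(t) = z(t) - C w(t)\<close>, which exists for every \<open>w(t) \<in> W\<close> by definition of \<open>\<Z>\<close>, so the closed loop
  is \<open>x' = (A + D) x + z\<close> whatever the malfunction does.

  To see that the free motion comes close to \<open>0\<close>, the spectral margin is passed to the Euler step
  \<open>E = I + h (A + D)\<close>: its spectrum lies in the open unit disc, so some power \<open>E\<^sup>K\<close> is a contraction
  (spectral radius bound of the Jordan normal form library), and \<open>\<Sum>k<K. |E\<^sup>k x|\<^sup>2\<close> is then a
  Lyapunov function for the flow.\<close>

section \<open>Operator norm and matrix powers\<close>

no_notation Matrix.vec_index (infixl "$" 100)
no_notation Matrix.scalar_prod (infix "\<bullet>" 70)
hide_const (open) VectorSpace.subspace Matrix.mat Matrix.orthogonal
hide_fact (open) Matrix.vec_eq_iff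

lemma norm_matrix_vector_mult_le: "norm (M *v x) \<le> mat_norm M * norm x"
  unfolding mat_norm_def using onorm[OF matrix_vector_mul_bounded_linear[of M]] by simp

lemma mat_norm_nonneg: "0 \<le> mat_norm M"
  unfolding mat_norm_def using onorm_pos_le[OF matrix_vector_mul_bounded_linear[of M]] by simp

lemma inner_matrix_vector_mult_le: "y \<bullet> (M *v y) \<le> mat_norm M * (y \<bullet> y)"
proof -
  have "y \<bullet> (M *v y) \<le> norm y * norm (M *v y)" by (rule norm_cauchy_schwarz)
  also have "\<dots> \<le> norm y * (mat_norm M * norm y)"
    by (rule mult_left_mono[OF norm_matrix_vector_mult_le]) simp
  also have "\<dots> = mat_norm M * (y \<bullet> y)" by (simp add: dot_square_norm power2_eq_square)
  finally show ?thesis .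
qed

lemma mat_norm_add_scaleR_id_le:
  fixes M :: "real^'n^'n"
  shows "mat_norm (M + c *\<^sub>R mat 1) \<le> mat_norm M + \<bar>c\<bar>"
proof -
  have "mat_norm (M + c *\<^sub>R mat 1) = onorm (\<lambda>x. M *v x + c *\<^sub>R x)"
    by (simp add: mat_norm_def matrix_vector_mult_add_rdistrib scaleR_matrix_vector_assoc[symmetric])
  also have "\<dots> \<le> onorm (\<lambda>x. M *v x) + onorm (\<lambda>x::real^'n. c *\<^sub>R x)"
    by (rule onorm_triangle) (auto intro: bounded_linear_scaleR_right matrix_vector_mul_bounded_linear)
  also have "onorm (\<lambda>x::real^'n. c *\<^sub>R x) = \<bar>c\<bar> * onorm (\<lambda>x::real^'n. x)"
    by (rule onorm_scaleR[OF bounded_linear_ident])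
  finally show ?thesis by (simp add: mat_norm_def onorm_id)
qed

lemma matrix_vector_mult_sum: "M *v (\<Sum>j\<in>S. f j) = (\<Sum>j\<in>S. M *v f j)"
  by (induction S rule: infinite_finite_induct) (auto simp: matrix_vector_right_distrib)

primrec matpow :: "'a::semiring_1^'n^'n \<Rightarrow> nat \<Rightarrow> 'a^'n^'n" where
  "matpow M 0 = mat 1"
| "matpow M (Suc k) = M ** matpow M k"

lemma matpow_Suc_right: "matpow M (Suc k) = matpow M k ** M"
  by (induction k) (simp_all add: matrix_mul_assoc)

lemma matpow_mult_vector: "matpow M k *v x = ((\<lambda>x. M *v x) ^^ k) x"
  by (induction k) (simp_all add: matrix_vector_mul_assoc[symmetric])

lemma matpow_scaleR: "matpow (c *\<^sub>R M) k = c ^ k *\<^sub>R matpow (M :: real^'n^'n) k"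
proof (induction k)
  case (Suc k)
  have "(a *\<^sub>R X) ** (b *\<^sub>R Y) = (a * b) *\<^sub>R (X ** Y)" for a b and X Y :: "real^'n^'n"
    by (simp add: vec_eq_iff matrix_matrix_mult_def sum_distrib_left mult_ac)
  with Suc show ?case by (simp add: mult.commute)
qed simp

lemma norm_matpow_vector_le: "norm (matpow M k *v x) \<le> mat_norm M ^ k * norm x"
proof (induction k)
  case (Suc k)
  have "norm (matpow M (Suc k) *v x) \<le> mat_norm M * norm (matpow M k *v x)"
    by (simp add: norm_matrix_vector_mult_le matrix_vector_mul_assoc[symmetric])
  also have "\<dots> \<le> mat_norm M * (mat_norm M ^ k * norm x)"
    by (rule mult_left_mono[OF Suc mat_norm_nonneg])
  finally show ?case by (simp add: mult_ac)
qed simp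

section \<open>Matrix exponential\<close>

text \<open>The library has no exponential of matrices of type \<open>real^'n^'n\<close> (they do not form a
  normed algebra), so \<open>e\<^sup>t\<^sup>M x\<close> is defined componentwise by its power series, to which the
  term-by-term differentiation theorem for real power series applies.\<close>

definition mat_exp_coeff :: "real^'n^'n \<Rightarrow> real^'n \<Rightarrow> 'n \<Rightarrow> nat \<Rightarrow> real" where
  "mat_exp_coeff M x i n = (matpow M n *v x) $ i / fact n"

definition mat_exp_vec :: "real^'n^'n \<Rightarrow> real \<Rightarrow> real^'n \<Rightarrow> real^'n" where
  "mat_exp_vec M t x = (\<chi> i. \<Sum>n. mat_exp_coeff M x i n * t ^ n)"

lemma summable_mat_exp_coeff: "summable (\<lambda>n. mat_exp_coeff M x i n * t ^ n)"
proof (rule summable_comparison_test)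
  let ?L = "mat_norm M"
  show "summable (\<lambda>n. norm x * (inverse (fact n) * (?L * \<bar>t\<bar>) ^ n))"
    by (intro summable_mult summable_exp)
  have "\<bar>(matpow M n *v x) $ i\<bar> * \<bar>t\<bar> ^ n / fact n \<le> ?L ^ n * norm x * \<bar>t\<bar> ^ n / fact n" for n
  proof -
    have "\<bar>(matpow M n *v x) $ i\<bar> \<le> ?L ^ n * norm x"
      using component_le_norm_cart[of "matpow M n *v x" i] norm_matpow_vector_le[of M n x] by linarith
    then show ?thesis by (intro divide_right_mono mult_right_mono) simp_all
  qed
  then show "\<exists>N. \<forall>n\<ge>N. norm (mat_exp_coeff M x i n * t ^ n) \<le> norm x * (inverse (fact n) * (?L * \<bar>t\<bar>) ^ n)"
    by (auto simp: mat_exp_coeff_def abs_mult power_abs power_mult_distrib divide_inverse mult_ac)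
qed

lemma diffs_mat_exp_coeff: "diffs (mat_exp_coeff M x i) n = (M *v (matpow M n *v x)) $ i / fact n"
  by (simp add: diffs_def mat_exp_coeff_def matrix_vector_mul_assoc[symmetric] fact_Suc)

lemma vec_lambda_eq_sum_axis: "(\<chi> i. f i) = (\<Sum>j\<in>UNIV. f j *\<^sub>R (axis j 1 :: real^'n))"
  using basis_expansion[of "\<chi> i. f i"] by (simp add: scalar_mult_eq_scaleR)

lemma has_vector_derivative_mat_exp_vec:
  fixes M :: "real^'n^'n"
  shows "((\<lambda>t. mat_exp_vec M t x) has_vector_derivative (M *v mat_exp_vec M t x)) (at t within S)"
proof -
  have deriv: "((\<lambda>t. \<Sum>n. mat_exp_coeff M x j n * t ^ n) has_real_derivative
      (\<Sum>n. diffs (mat_exp_coeff M x j) n * t ^ n)) (at t within S)" for j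
    using termdiffs_strong_converges_everywhere[OF summable_mat_exp_coeff, of M x j t]
    by (rule DERIV_subset) simp
  have "diffs (mat_exp_coeff M x j) n * t ^ n = (\<Sum>l\<in>UNIV. M $ j $ l * (mat_exp_coeff M x l n * t ^ n))"
    for j n
  proof -
    have "diffs (mat_exp_coeff M x j) n * t ^ n
        = (\<Sum>l\<in>UNIV. M $ j $ l * (matpow M n *v x) $ l) / fact n * t ^ n"
      by (simp add: diffs_mat_exp_coeff matrix_vector_mult_def[of M])
    then show ?thesis
      by (simp add: mat_exp_coeff_def sum_divide_distrib sum_distrib_right mult.assoc)
  qed
  then have "(\<Sum>n. diffs (mat_exp_coeff M x j) n * t ^ n)
      = (\<Sum>n. \<Sum>l\<in>UNIV. M $ j $ l * (mat_exp_coeff M x l n * t ^ n))" for j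
    by simp
  also have "\<dots> j = (\<Sum>l\<in>UNIV. \<Sum>n. M $ j $ l * (mat_exp_coeff M x l n * t ^ n))" for j
    by (rule suminf_sum) (rule summable_mult[OF summable_mat_exp_coeff])
  also have "\<dots> j = (\<Sum>l\<in>UNIV. M $ j $ l * (\<Sum>n. mat_exp_coeff M x l n * t ^ n))" for j
    by (simp add: suminf_mult summable_mat_exp_coeff)
  finally have coeffs: "(\<Sum>n. diffs (mat_exp_coeff M x j) n * t ^ n) = (M *v mat_exp_vec M t x) $ j" for j
    by (simp add: mat_exp_vec_def matrix_vector_mult_def)
  have "((\<lambda>t. \<Sum>j\<in>UNIV. (\<Sum>n. mat_exp_coeff M x j n * t ^ n) *\<^sub>R (axis j 1 :: real^'n)) has_vector_derivative
        (\<Sum>j\<in>UNIV. (\<Sum>n. diffs (mat_exp_coeff M x j) n * t ^ n) *\<^sub>R axis j 1)) (at t within S)"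
    by (rule has_vector_derivative_sum)
      (use has_vector_derivative_scaleR[OF deriv has_vector_derivative_const] in simp)
  then show ?thesis
    by (simp add: coeffs mat_exp_vec_def vec_lambda_eq_sum_axis[symmetric])
qed

lemma mat_exp_vec_0: "mat_exp_vec M 0 x = x"
proof -
  have "(\<Sum>n. mat_exp_coeff M x i n * 0 ^ n) = x $ i" for i
    using powser_zero[of "mat_exp_coeff M x i"] by (simp add: mat_exp_coeff_def)
  then show ?thesis by (simp add: mat_exp_vec_def vec_eq_iff)
qed

lemma linear_ode_vanishes_forward:
  fixes y :: "real \<Rightarrow> real^'n"
  assumes T: "0 \<le> T"
    and deriv: "\<And>t. t \<in> {0..T} \<Longrightarrow> (y has_vector_derivative (M *v y t)) (at t within {0..T})"
    and "y 0 = 0"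
  shows "y T = 0"
proof -
  \<comment> \<open>\<open>e\<^sup>-\<^sup>2\<^sup>L\<^sup>t |y t|\<^sup>2\<close> with \<open>L = \<parallel>M\<parallel>\<close> is nonincreasing.\<close>
  define L where "L = mat_norm M"
  define g where "g t = exp (-(2*L) * t) * (y t \<bullet> y t)" for t
  define g' where "g' t = exp (-(2*L) * t) * (2 * (y t \<bullet> (M *v y t)) - 2 * L * (y t \<bullet> y t))" for t
  have dg: "(g has_real_derivative g' t) (at t within {0..T})" if "t \<in> {0..T}" for t
  proof -
    have "((\<lambda>t. y t \<bullet> y t) has_vector_derivative (y t \<bullet> (M *v y t) + (M *v y t) \<bullet> y t))
        (at t within {0..T})"
      using bounded_bilinear.has_vector_derivative[OF bounded_bilinear_inner deriv[OF that] deriv[OF that]] .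
    then have inner_deriv: "((\<lambda>t. y t \<bullet> y t) has_real_derivative 2 * (y t \<bullet> (M *v y t)))
        (at t within {0..T})"
      by (simp add: has_real_derivative_iff_has_vector_derivative inner_commute)
    have exp_deriv: "((\<lambda>t. exp (-(2*L) * t)) has_real_derivative (-(2*L)) * exp (-(2*L) * t))
        (at t within {0..T})"
      by (auto intro!: derivative_eq_intros)
    show ?thesis
      unfolding g_def g'_def using DERIV_mult[OF exp_deriv inner_deriv] by (simp add: algebra_simps)
  qed
  have g'_nonpos: "g' t \<le> 0" for t
    using inner_matrix_vector_mult_le[of "y t" M] by (simp add: g'_def L_def mult_le_0_iff)
  then have "g T \<le> g 0"
  proof (intro DERIV_nonpos_imp_decreasing_open[OF T _ DERIV_continuous_on[OF dg]])
    fix t assume "0 < t" "t < T"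
    then have "(g has_real_derivative g' t) (at t)"
      using dg[of t] at_within_Icc_at[of 0 t T] by auto
    then show "\<exists>y. (g has_real_derivative y) (at t) \<and> y \<le> 0" using g'_nonpos by blast
  qed
  then have "y T \<bullet> y T \<le> 0" using \<open>y 0 = 0\<close> by (simp add: g_def mult_le_0_iff)
  then show ?thesis by (metis antisym inner_ge_zero inner_eq_zero_iff)
qed

lemma linear_ode_vanishes:
  fixes y :: "real \<Rightarrow> real^'n"
  assumes deriv: "\<And>t. (y has_vector_derivative (M *v y t)) (at t)"
    and "y 0 = 0"
  shows "y t = 0"
proof (cases "0 \<le> t")
  case True
  show ?thesis
    by (rule linear_ode_vanishes_forward[where M=M and T=t and y=y, OF True _ \<open>y 0 = 0\<close>])
      (rule has_vector_derivative_at_within[OF deriv])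
next
  case False
  define z where "z = (\<lambda>s. y (- s))"
  have "((y \<circ> uminus) has_vector_derivative ((-1) *\<^sub>R (M *v y (- s)))) (at s)" for s
    by (rule vector_diff_chain_at) (auto intro!: derivative_eq_intros deriv)
  then have dz: "(z has_vector_derivative ((-M) *v z s)) (at s)" for s
    using matrix_vector_mult_diff_rdistrib[of 0 M] by (simp add: z_def o_def)
  have "z (-t) = 0"
  proof (rule linear_ode_vanishes_forward[where T="-t" and M="-M" and y=z])
    show "0 \<le> -t" "z 0 = 0" using False \<open>y 0 = 0\<close> by (simp_all add: z_def)
  qed (rule has_vector_derivative_at_within[OF dz])
  then show ?thesis by (simp add: z_def)
qed

lemma linear_ode_unique:
  fixes y z :: "real \<Rightarrow> real^'n"
  assumes "\<And>t. (y has_vector_derivative (M *v y t)) (at t)"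
    and "\<And>t. (z has_vector_derivative (M *v z t)) (at t)"
    and "y 0 = z 0"
  shows "y t = z t"
proof -
  have "y t - z t = 0"
    by (rule linear_ode_vanishes[where M=M and y="\<lambda>t. y t - z t"])
      (use assms in \<open>auto intro!: derivative_eq_intros simp: algebra_simps\<close>)
  then show ?thesis by simp
qed

lemma has_vector_derivative_mat_exp_vec_at:
  "((\<lambda>t. mat_exp_vec M t x) has_vector_derivative (M *v mat_exp_vec M t x)) (at t)"
  using has_vector_derivative_mat_exp_vec[of M x t UNIV] by simp

lemma mat_exp_vec_add: "mat_exp_vec M t (x + y) = mat_exp_vec M t x + mat_exp_vec M t y"
  by (rule linear_ode_unique[where M=M])
    (auto intro!: derivative_eq_intros has_vector_derivative_mat_exp_vec_at
      simp: mat_exp_vec_0 algebra_simps)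

lemma mat_exp_vec_scaleR: "mat_exp_vec M t (c *\<^sub>R x) = c *\<^sub>R mat_exp_vec M t x"
  by (rule linear_ode_unique[where M=M])
    (auto intro!: derivative_eq_intros has_vector_derivative_mat_exp_vec_at
      simp: mat_exp_vec_0 algebra_simps)

lemma linear_mat_exp_vec: "linear (mat_exp_vec M t)"
  by (rule linearI) (simp_all add: mat_exp_vec_add mat_exp_vec_scaleR)

lemma mat_exp_vec_zero: "mat_exp_vec M t 0 = 0"
  using mat_exp_vec_scaleR[of M t 0] by simp

lemma mat_exp_vec_minus: "mat_exp_vec M t (- x) = - mat_exp_vec M t x"
  using mat_exp_vec_scaleR[of M t "-1"] by simp

lemma mat_exp_vec_commute: "mat_exp_vec M t (M *v x) = M *v mat_exp_vec M t x"
proof (rule linear_ode_unique[where M=M])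
  show "((\<lambda>t. M *v mat_exp_vec M t x) has_vector_derivative M *v (M *v mat_exp_vec M t x)) (at t)" for t
    using bounded_linear.has_vector_derivative[OF matrix_vector_mul_bounded_linear
        has_vector_derivative_mat_exp_vec_at] .
qed (auto intro!: has_vector_derivative_mat_exp_vec_at simp: mat_exp_vec_0)

lemma mat_exp_vec_add_time: "mat_exp_vec M (s + t) x = mat_exp_vec M s (mat_exp_vec M t x)"
proof -
  have "(((\<lambda>s. mat_exp_vec M s x) \<circ> (\<lambda>s. s + t)) has_vector_derivative
      1 *\<^sub>R (M *v mat_exp_vec M (s + t) x)) (at s)" for s
    by (rule vector_diff_chain_at) (auto intro!: derivative_eq_intros has_vector_derivative_mat_exp_vec_at)
  then have "((\<lambda>s. mat_exp_vec M (s + t) x) has_vector_derivative M *v mat_exp_vec M (s + t) x) (at s)" for s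
    by (simp add: o_def)
  then show ?thesis
    by (rule linear_ode_unique[where M=M and z="\<lambda>s. mat_exp_vec M s (mat_exp_vec M t x)"])
      (auto intro!: has_vector_derivative_mat_exp_vec_at simp: mat_exp_vec_0)
qed

lemma mat_exp_vec_inverse: "mat_exp_vec M (-t) (mat_exp_vec M t x) = x"
  using mat_exp_vec_add_time[of M "-t" t x] by (simp add: mat_exp_vec_0)

lemma mat_exp_vec_inverse': "mat_exp_vec M t (mat_exp_vec M (-t) x) = x"
  using mat_exp_vec_add_time[of M t "-t" x] by (simp add: mat_exp_vec_0)

lemma mat_exp_vec_basis_expansion: "mat_exp_vec M t v = (\<Sum>j\<in>UNIV. (v $ j) *\<^sub>R mat_exp_vec M t (axis j 1))"
proof -
  have "mat_exp_vec M t v = mat_exp_vec M t (\<Sum>j\<in>UNIV. (v $ j) *\<^sub>R axis j 1)"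
    using basis_expansion[of v] by (simp add: scalar_mult_eq_scaleR)
  then show ?thesis by (simp add: linear_sum[OF linear_mat_exp_vec] mat_exp_vec_scaleR)
qed

lemma has_vector_derivative_mat_exp_vec_comp:
  assumes "(a has_vector_derivative a') (at t within S)"
  shows "((\<lambda>t. mat_exp_vec M t (a t)) has_vector_derivative
           (M *v mat_exp_vec M t (a t) + mat_exp_vec M t a')) (at t within S)"
proof -
  have "((\<lambda>t. a t $ j) has_real_derivative (a' $ j)) (at t within S)" for j
    using bounded_linear.has_vector_derivative[OF bounded_linear_vec_nth assms]
    by (simp add: has_real_derivative_iff_has_vector_derivative)
  then have "((\<lambda>t. \<Sum>j\<in>UNIV. (a t $ j) *\<^sub>R mat_exp_vec M t (axis j 1)) has_vector_derivative
     (\<Sum>j\<in>UNIV. (a t $ j) *\<^sub>R (M *v mat_exp_vec M t (axis j 1)) + (a' $ j) *\<^sub>R mat_exp_vec M t (axis j 1)))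
     (at t within S)"
    by (intro has_vector_derivative_sum has_vector_derivative_scaleR has_vector_derivative_mat_exp_vec)
  also have "(\<Sum>j\<in>UNIV. (a t $ j) *\<^sub>R (M *v mat_exp_vec M t (axis j 1))
      + (a' $ j) *\<^sub>R mat_exp_vec M t (axis j 1)) = M *v mat_exp_vec M t (a t) + mat_exp_vec M t a'"
    by (simp add: sum.distrib mat_exp_vec_basis_expansion[of M t "a t"] mat_exp_vec_basis_expansion[of M t a']
        matrix_vector_mult_sum matrix_vector_mult_scaleR)
  finally show ?thesis by (simp add: mat_exp_vec_basis_expansion[symmetric])
qed

lemma continuous_on_mat_exp_vec:
  assumes "continuous_on S f" "continuous_on S a"
  shows "continuous_on S (\<lambda>s. mat_exp_vec M (f s) (a s))"
proof -
  have "continuous_on UNIV (\<lambda>t. mat_exp_vec M t x)" for x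
    by (rule continuous_on_vector_derivative) (rule has_vector_derivative_mat_exp_vec)
  then have "continuous_on S (\<lambda>s. \<Sum>j\<in>UNIV. (a s $ j) *\<^sub>R mat_exp_vec M (f s) (axis j 1))"
    by (intro continuous_intros continuous_on_compose2[OF _ assms(1)] assms(2)) auto
  then show ?thesis by (simp add: mat_exp_vec_basis_expansion[symmetric])
qed

section \<open>Exponential stability from a spectral margin\<close>

definition complex_eigenvalue :: "real^'n^'n \<Rightarrow> complex \<Rightarrow> bool" where
  "complex_eigenvalue M c \<longleftrightarrow> (\<exists>v. v \<noteq> 0 \<and> cmat M *v v = c *s v)"

lemma cmat_mult: "cmat (X ** Y) = cmat X ** cmat Y"
  by (simp add: cmat_def matrix_matrix_mult_def vec_eq_iff)

lemma cmat_matpow: "cmat (matpow M k) = matpow (cmat M) k"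
proof (induction k)
  case 0
  show ?case by (auto simp: cmat_def vec_eq_iff Finite_Cartesian_Product.mat_def)
qed (simp add: cmat_mult)

lemma cmat_affine_mult_vector:
  fixes M :: "real^'n^'n"
  shows "cmat (a *\<^sub>R M + b *\<^sub>R mat 1) *v v = of_real a *s (cmat M *v v) + of_real b *s v"
proof -
  have "(\<Sum>j\<in>UNIV. of_real b * of_real ((mat 1 :: real^'n^'n) $ i $ j) * v $ j)
      = (\<Sum>j\<in>UNIV. if j = i then of_real b * v $ j else 0)" for i
    by (rule sum.cong) (simp_all add: Finite_Cartesian_Product.mat_def)
  then show ?thesis
    by (simp add: vec_eq_iff cmat_def matrix_vector_mult_def distrib_right sum.distrib
        sum_distrib_left mult.assoc)
qed

lemma complex_eigenvalue_affine:
  assumes "complex_eigenvalue (a *\<^sub>R M + b *\<^sub>R mat 1) \<mu>" "a \<noteq> 0"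
  shows "complex_eigenvalue M ((\<mu> - of_real b) / of_real a)"
proof -
  obtain v where "v \<noteq> 0" and "cmat (a *\<^sub>R M + b *\<^sub>R mat 1) *v v = \<mu> *s v"
    using assms(1) by (auto simp: complex_eigenvalue_def)
  then have "of_real a *s (cmat M *v v) = (\<mu> - of_real b) *s v"
    by (simp add: cmat_affine_mult_vector vec_eq_iff algebra_simps)
  then have "cmat M *v v = ((\<mu> - of_real b) / of_real a) *s v"
    using assms(2) by (simp add: vec_eq_iff field_simps)
  with \<open>v \<noteq> 0\<close> show ?thesis by (auto simp: complex_eigenvalue_def)
qed

lemma complex_eigenvalue_shift:
  assumes "complex_eigenvalue M c"
  shows "complex_eigenvalue (M + s *\<^sub>R mat 1) (c + of_real s)"
proof -
  obtain v where "v \<noteq> 0" and "cmat M *v v = c *s v"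
    using assms by (auto simp: complex_eigenvalue_def)
  then have "cmat (1 *\<^sub>R M + s *\<^sub>R mat 1) *v v = (c + of_real s) *s v"
    by (simp only: cmat_affine_mult_vector) (simp add: vec_eq_iff algebra_simps)
  with \<open>v \<noteq> 0\<close> show ?thesis by (auto simp: complex_eigenvalue_def)
qed

lemma complex_eigenvalue_norm_le:
  assumes "complex_eigenvalue M c"
  shows "cmod c \<le> (\<Sum>i\<in>UNIV. \<Sum>j\<in>UNIV. \<bar>M $ i $ j\<bar>)"
proof -
  obtain v where "v \<noteq> 0" and ev: "cmat M *v v = c *s v"
    using assms by (auto simp: complex_eigenvalue_def)
  have "Max (range (\<lambda>i. cmod (v $ i))) \<in> range (\<lambda>i. cmod (v $ i))"
    by (rule Max_in) auto
  then obtain i0 where "Max (range (\<lambda>i. cmod (v $ i))) = cmod (v $ i0)"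
    by blast
  moreover have "cmod (v $ i) \<le> Max (range (\<lambda>i. cmod (v $ i)))" for i
    by (rule Max_ge) auto
  ultimately have i0: "cmod (v $ i) \<le> cmod (v $ i0)" for i
    by simp
  obtain i1 where "v $ i1 \<noteq> 0"
    using \<open>v \<noteq> 0\<close> by (auto simp: vec_eq_iff)
  then have pos: "cmod (v $ i0) > 0"
    using i0[of i1] by (meson norm_le_zero_iff not_le order_trans)
  have "cmod c * cmod (v $ i0) = cmod (\<Sum>j\<in>UNIV. of_real (M $ i0 $ j) * v $ j)"
    using ev by (simp add: vec_eq_iff norm_mult matrix_vector_mult_def cmat_def)
  also have "\<dots> \<le> (\<Sum>j\<in>UNIV. \<bar>M $ i0 $ j\<bar> * cmod (v $ i0))"
    by (rule order_trans[OF norm_sum sum_mono]) (simp add: norm_mult mult_left_mono i0)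
  also have "\<dots> = (\<Sum>j\<in>UNIV. \<bar>M $ i0 $ j\<bar>) * cmod (v $ i0)"
    by (simp add: sum_distrib_right)
  finally have "cmod c \<le> (\<Sum>j\<in>UNIV. \<bar>M $ i0 $ j\<bar>)"
    using pos by simp
  also have "\<dots> \<le> (\<Sum>i\<in>UNIV. \<Sum>j\<in>UNIV. \<bar>M $ i $ j\<bar>)"
    by (rule member_le_sum) (auto intro: sum_nonneg)
  finally show ?thesis .
qed

definition jnf_of :: "(nat \<Rightarrow> 'n::finite) \<Rightarrow> complex^'n^'n \<Rightarrow> complex mat" where
  "jnf_of p X = Matrix.mat CARD('n) CARD('n) (\<lambda>(i, j). X $ p i $ p j)"

lemma jnf_of_carrier: "jnf_of (p :: nat \<Rightarrow> 'n::finite) X \<in> carrier_mat CARD('n) CARD('n)"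
  by (simp add: jnf_of_def)

lemma dim_jnf_of [simp]:
  "dim_row (jnf_of (p :: nat \<Rightarrow> 'n::finite) X) = CARD('n)" "dim_col (jnf_of p X) = CARD('n)"
  by (simp_all add: jnf_of_def)

context
  fixes p :: "nat \<Rightarrow> 'n::finite"
  assumes p: "bij_betw p {0..<CARD('n)} UNIV"
begin

lemma jnf_of_mult: "jnf_of p (X ** Y) = jnf_of p X * jnf_of p Y"
proof (rule eq_matI)
  fix i j assume "i < dim_row (jnf_of p X * jnf_of p Y)" "j < dim_col (jnf_of p X * jnf_of p Y)"
  then have i: "i < CARD('n)" and j: "j < CARD('n)" by (simp_all add: jnf_of_def)
  have "(jnf_of p X * jnf_of p Y) $$ (i, j) = (\<Sum>l\<in>{0..<CARD('n)}. X $ p i $ p l * Y $ p l $ p j)"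
    using i j by (simp add: jnf_of_def scalar_prod_def)
  also have "\<dots> = (\<Sum>l\<in>UNIV. X $ p i $ l * Y $ l $ p j)"
    by (rule sum.reindex_bij_betw[OF p])
  finally show "jnf_of p (X ** Y) $$ (i, j) = (jnf_of p X * jnf_of p Y) $$ (i, j)"
    using i j by (simp add: jnf_of_def matrix_matrix_mult_def)
qed (simp_all add: jnf_of_def)

lemma jnf_of_one: "jnf_of p (mat 1) = 1\<^sub>m CARD('n)"
proof (rule eq_matI)
  fix i j assume "i < dim_row (1\<^sub>m CARD('n) :: complex mat)" "j < dim_col (1\<^sub>m CARD('n) :: complex mat)"
  then have "i < CARD('n)" "j < CARD('n)" "p i = p j \<longleftrightarrow> i = j"
    using p by (auto simp: bij_betw_def inj_on_def)
  then show "jnf_of p (mat 1) $$ (i, j) = 1\<^sub>m CARD('n) $$ (i, j)"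
    by (simp add: jnf_of_def Finite_Cartesian_Product.mat_def)
qed (simp_all add: jnf_of_def)

lemma jnf_of_matpow: "jnf_of p (matpow X k) = jnf_of p X ^\<^sub>m k"
  by (induction k) (simp_all add: jnf_of_one jnf_of_mult matpow_Suc_right del: matpow.simps(2))

lemma jnf_of_entry: "i < CARD('n) \<Longrightarrow> j < CARD('n) \<Longrightarrow> jnf_of p X $$ (i, j) = X $ p i $ p j"
  by (simp add: jnf_of_def)

lemma complex_eigenvalue_if_eigenvalue_jnf_of:
  assumes "eigenvalue (jnf_of p (cmat M)) \<mu>"
  shows "complex_eigenvalue M \<mu>"
proof -
  define q where "q = inv_into {0..<CARD('n)} p"
  have qp: "q (p l) = l" if "l < CARD('n)" for l
    using p that unfolding q_def bij_betw_def by (simp add: inv_into_f_f)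
  have pq: "p (q i) = i" for i
    using p unfolding q_def bij_betw_def by (simp add: f_inv_into_f)
  have q_lt: "q i < CARD('n)" for i
    using p unfolding q_def bij_betw_def by (metis atLeastLessThan_iff inv_into_into UNIV_I)
  from assms obtain v where "eigenvector (jnf_of p (cmat M)) v \<mu>"
    unfolding eigenvalue_def by blast
  then have "v \<in> carrier_vec CARD('n)" "v \<noteq> 0\<^sub>v CARD('n)"
    and ev: "jnf_of p (cmat M) *\<^sub>v v = \<mu> \<cdot>\<^sub>v v"
    unfolding eigenvector_def by auto
  define u :: "complex^'n" where "u = (\<chi> i. vec_index v (q i))"
  have "u \<noteq> 0"
  proof
    assume u0: "u = 0"
    have "v = 0\<^sub>v CARD('n)"
    proof (rule eq_vecI)
      fix l assume "l < dim_vec (0\<^sub>v CARD('n) :: complex vec)"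
      then have l: "l < CARD('n)" by simp
      have "u $ p l = 0" using u0 by simp
      then show "vec_index v l = vec_index (0\<^sub>v CARD('n)) l" using l qp[OF l] by (simp add: u_def)
    qed (use \<open>v \<in> carrier_vec CARD('n)\<close> in simp)
    with \<open>v \<noteq> 0\<^sub>v CARD('n)\<close> show False by simp
  qed
  moreover have "(cmat M *v u) $ i = (\<mu> *s u) $ i" for i
  proof -
    have "(cmat M *v u) $ i = (\<Sum>l\<in>UNIV. cmat M $ i $ l * u $ l)"
      by (simp add: matrix_vector_mult_def)
    also have "\<dots> = (\<Sum>l\<in>{0..<CARD('n)}. cmat M $ i $ p l * u $ p l)"
      by (rule sum.reindex_bij_betw[OF p, symmetric])
    also have "\<dots> = (\<Sum>l\<in>{0..<CARD('n)}. cmat M $ p (q i) $ p l * vec_index v l)"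
      by (rule sum.cong) (simp_all add: u_def qp pq)
    also have "\<dots> = vec_index (jnf_of p (cmat M) *\<^sub>v v) (q i)"
      using q_lt[of i] \<open>v \<in> carrier_vec CARD('n)\<close> by (simp add: jnf_of_def scalar_prod_def)
    finally show ?thesis
      using q_lt[of i] \<open>v \<in> carrier_vec CARD('n)\<close> ev by (simp add: u_def)
  qed
  ultimately show ?thesis
    unfolding complex_eigenvalue_def vec_eq_iff by blast
qed

end

lemma matpow_entries_bounded:
  fixes M :: "real^'n^'n"
  assumes "\<And>\<mu>. complex_eigenvalue M \<mu> \<Longrightarrow> cmod \<mu> < 1"
  shows "\<exists>c. \<forall>k i j. \<bar>matpow M k $ i $ j\<bar> \<le> c"
proof -
  obtain p :: "nat \<Rightarrow> 'n" where p: "bij_betw p {0..<CARD('n)} UNIV"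
    using ex_bij_betw_nat_finite[of "UNIV :: 'n set"] by auto
  define F where "F = jnf_of p (cmat M)"
  have F: "F \<in> carrier_mat CARD('n) CARD('n)"
    unfolding F_def by (rule jnf_of_carrier)
  have "\<forall>a\<in>norm ` spectrum F. a < 1"
    using assms complex_eigenvalue_if_eigenvalue_jnf_of[OF p]
    by (auto simp: spectrum_def F_def)
  then have "spectral_radius F < 1"
    using card_finite_spectrum(1)[OF F] spectrum_non_empty[OF F]
    unfolding spectral_radius_def by (subst Max_less_iff) auto
  then obtain c where c: "\<And>k. norm_bound (F ^\<^sub>m k) c"
    using spectral_radius_jnf_norm_bound_less_1_upper_triangular[OF F] by auto
  define q where "q = inv_into {0..<CARD('n)} p"
  have pq: "p (q i) = i" for i
    using p unfolding q_def bij_betw_def by (simp add: f_inv_into_f)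
  have q_lt: "q i < CARD('n)" for i
    using p unfolding q_def bij_betw_def by (metis atLeastLessThan_iff inv_into_into UNIV_I)
  have "\<bar>matpow M k $ i $ j\<bar> \<le> c" for k i j
  proof -
    have "(F ^\<^sub>m k) $$ (q i, q j) = cmat (matpow M k) $ i $ j"
      using q_lt[of i] q_lt[of j]
      by (simp add: F_def jnf_of_matpow[OF p, symmetric] cmat_matpow jnf_of_entry[OF p] pq)
    then have "(F ^\<^sub>m k) $$ (q i, q j) = of_real (matpow M k $ i $ j)"
      by (simp add: cmat_def)
    moreover have "norm ((F ^\<^sub>m k) $$ (q i, q j)) \<le> c"
      using c[of k] q_lt[of i] q_lt[of j] F unfolding norm_bound_def by auto
    ultimately show ?thesis by (simp only: norm_of_real)
  qed
  then show ?thesis by blast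
qed

lemma cmod_one_plus_mult_sq_le:
  fixes lam :: complex
  assumes "h > 0" "Re lam \<le> -s" "cmod lam \<le> K" "h * K\<^sup>2 = s"
  shows "(cmod (1 + of_real h * lam))\<^sup>2 \<le> 1 - h * s"
proof -
  have "(cmod (1 + of_real h * lam))\<^sup>2 = (1 + h * Re lam)\<^sup>2 + (h * Im lam)\<^sup>2"
    by (simp add: cmod_power2)
  also have "\<dots> = 1 + 2 * h * Re lam + h\<^sup>2 * ((Re lam)\<^sup>2 + (Im lam)\<^sup>2)"
    by (simp add: power2_eq_square algebra_simps)
  also have "\<dots> = 1 + 2 * h * Re lam + h\<^sup>2 * (cmod lam)\<^sup>2"
    by (simp add: cmod_power2)
  also have "\<dots> \<le> 1 + 2 * h * (-s) + h\<^sup>2 * K\<^sup>2"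
    using assms by (intro add_mono mult_left_mono power_mono) auto
  also have "\<dots> = 1 - h * s"
    using assms(4) by (simp add: power2_eq_square algebra_simps)
  finally show ?thesis .
qed

lemma euler_step_spectrum_in_unit_disc:
  fixes M :: "real^'n^'n"
  assumes "s > 0" and margin: "\<And>c. complex_eigenvalue M c \<Longrightarrow> Re c \<le> -s"
  shows "\<exists>h>0. \<exists>r. 0 < r \<and> r < 1 \<and>
    (\<forall>\<mu>. complex_eigenvalue ((1 / r) *\<^sub>R (mat 1 + h *\<^sub>R M)) \<mu> \<longrightarrow> cmod \<mu> < 1)"
proof -
  \<comment> \<open>For \<open>h = s / K\<^sup>2\<close> with \<open>K\<close> a bound on the eigenvalues \<open>\<lambda>\<close> of \<open>M\<close>, every eigenvalue
     \<open>1 + h \<lambda>\<close> of \<open>I + h M\<close> has modulus at most \<open>\<surd>(1 - h s) < 1\<close>.\<close>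
  define K where "K = (\<Sum>i\<in>UNIV. \<Sum>j\<in>UNIV. \<bar>M $ i $ j\<bar>) + s + 1"
  have "0 \<le> (\<Sum>i\<in>UNIV. \<Sum>j\<in>UNIV. \<bar>M $ i $ j\<bar>)" by (intro sum_nonneg) auto
  then have "K > s" by (simp add: K_def)
  define h where "h = s / K\<^sup>2"
  have h: "h > 0" "h * K\<^sup>2 = s" using \<open>s > 0\<close> \<open>K > s\<close> by (simp_all add: h_def)
  have "s\<^sup>2 < K\<^sup>2" using \<open>s > 0\<close> \<open>K > s\<close> by (intro power_strict_mono) auto
  then have hs: "0 < h * s" "h * s < 1"
    using \<open>s > 0\<close> h by (auto simp: h_def power2_eq_square divide_simps)
  define r0 where "r0 = sqrt (1 - h * s)"
  define r where "r = (1 + r0) / 2"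
  have "0 \<le> r0" "r0 < 1"
    using hs by (simp_all add: r0_def real_sqrt_lt_1_iff)
  then have r: "0 < r" "r < 1" "r0 < r"
    by (simp_all add: r_def)
  have "cmod \<mu> < 1" if "complex_eigenvalue ((1 / r) *\<^sub>R (mat 1 + h *\<^sub>R M)) \<mu>" for \<mu>
  proof -
    define lam where "lam = (\<mu> - of_real (1 / r)) / of_real (h / r)"
    have "(1 / r) *\<^sub>R (mat 1 + h *\<^sub>R M) = (h / r) *\<^sub>R M + (1 / r) *\<^sub>R mat 1"
      by (simp add: algebra_simps)
    then have "complex_eigenvalue M lam"
      unfolding lam_def using that h r by (intro complex_eigenvalue_affine) auto
    then have "(cmod (1 + of_real h * lam))\<^sup>2 \<le> 1 - h * s"
      using h margin complex_eigenvalue_norm_le[of M lam] \<open>s > 0\<close>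
      by (intro cmod_one_plus_mult_sq_le[where K=K]) (auto simp: K_def)
    moreover have "1 + of_real h * lam = of_real r * \<mu>"
      using h r by (simp add: lam_def field_simps)
    ultimately have "r * cmod \<mu> \<le> r0"
      using r by (simp add: r0_def norm_mult real_le_rsqrt)
    then have "r * cmod \<mu> < r * 1" using r by linarith
    then show ?thesis using r by (simp only: mult_less_cancel_left_pos)
  qed
  then show ?thesis using h r by blast
qed

lemma hurwitz_euler_step_contraction:
  fixes M :: "real^'n^'n"
  assumes "s > 0" and "\<And>c. complex_eigenvalue M c \<Longrightarrow> Re c \<le> -s"
  shows "\<exists>h>0. \<exists>K. \<forall>x. norm (matpow (mat 1 + h *\<^sub>R M) K *v x) \<le> norm x / 2"
proof -
  obtain h r where h: "h > 0" and r: "0 < r" "r < 1"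
    and disc: "\<And>\<mu>. complex_eigenvalue ((1 / r) *\<^sub>R (mat 1 + h *\<^sub>R M)) \<mu> \<Longrightarrow> cmod \<mu> < 1"
    using euler_step_spectrum_in_unit_disc[OF assms] by blast
  define E where "E = mat 1 + h *\<^sub>R M"
  obtain c where c: "\<And>k i j. \<bar>matpow ((1 / r) *\<^sub>R E) k $ i $ j\<bar> \<le> c"
    using matpow_entries_bounded[OF disc] unfolding E_def by blast
  have entry: "\<bar>matpow E k $ i $ j\<bar> \<le> c * r ^ k" for k i j
    using c[of k i j] r by (simp add: matpow_scaleR abs_mult power_divide field_simps)
  define C where "C = real CARD('n) * real CARD('n) * c"
  have norm_le: "norm (matpow E k *v x) \<le> C * r ^ k * norm x" for k x
  proof -
    have "norm (matpow E k *v x) \<le> onorm ((*v) (matpow E k)) * norm x"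
      by (rule onorm[OF matrix_vector_mul_bounded_linear])
    also have "\<dots> \<le> real CARD('n) * real CARD('n) * (c * r ^ k) * norm x"
      by (intro mult_right_mono onorm_le_matrix_component entry) simp
    also have "\<dots> = C * r ^ k * norm x"
      by (simp add: C_def)
    finally show ?thesis .
  qed
  have "(\<lambda>k. C * r ^ k) \<longlonglongrightarrow> C * 0"
    using r by (intro tendsto_intros LIMSEQ_power_zero) simp
  then have "eventually (\<lambda>k. C * r ^ k < 1 / 2) sequentially"
    by (rule order_tendstoD(2)) simp
  then obtain K where "C * r ^ K < 1 / 2"
    by (auto simp: eventually_sequentially)
  then have half: "C * r ^ K * norm x \<le> 1 / 2 * norm x" for x
    by (intro mult_right_mono) auto
  have "norm (matpow E K *v x) \<le> norm x / 2" for x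
    using norm_le[of K x] half[of x] by linarith
  then show ?thesis using h unfolding E_def by blast
qed

lemma euler_lyapunov_cross_sum_le:
  fixes M :: "real^'n^'n" and h :: real
  defines "E \<equiv> mat 1 + h *\<^sub>R M"
  assumes "h > 0" and contraction: "norm (matpow E K *v v) \<le> norm v / 2"
  shows "(\<Sum>k<K. (matpow E k *v v) \<bullet> (matpow E k *v (M *v v))) \<le> - (v \<bullet> v) / (4 * h)"
proof -
  \<comment> \<open>Evaluate \<open>q w = (\<Sum>k<K. |E\<^sup>k w|\<^sup>2)\<close> at \<open>E v = v + h M v\<close> in two ways.\<close>
  define q where "q w = (\<Sum>k<K. (matpow E k *v w) \<bullet> (matpow E k *v w))" for w
  define g where "g k = (matpow E k *v v) \<bullet> (matpow E k *v v)" for k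
  have shift: "matpow E k *v (E *v v) = matpow E (Suc k) *v v" for k
    by (simp add: matpow_Suc_right matrix_vector_mul_assoc del: matpow.simps(2))
  have "q (E *v v) = (\<Sum>k<K. g (Suc k))"
    by (simp add: q_def g_def shift)
  also have "\<dots> = q v - v \<bullet> v + g K"
    using sum.lessThan_Suc_shift[of g K] sum.lessThan_Suc[of g K]
    by (simp add: q_def g_def)
  finally have telescope: "q (E *v v) = q v - v \<bullet> v + g K" .
  have square: "(a + h *\<^sub>R b) \<bullet> (a + h *\<^sub>R b) = a \<bullet> a + 2 * h * (a \<bullet> b) + h\<^sup>2 * (b \<bullet> b)"
    for a b :: "real^'n"
    by (simp add: inner_add_left inner_add_right inner_commute power2_eq_square)
  have "matpow E k *v (E *v v) = matpow E k *v v + h *\<^sub>R (matpow E k *v (M *v v))" for k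
    by (simp add: E_def matrix_vector_mult_add_rdistrib scaleR_matrix_vector_assoc[symmetric]
        matrix_vector_right_distrib matrix_vector_mult_scaleR)
  then have "q (E *v v) = (\<Sum>k<K. (matpow E k *v v) \<bullet> (matpow E k *v v)
      + 2 * h * ((matpow E k *v v) \<bullet> (matpow E k *v (M *v v)))
      + h\<^sup>2 * ((matpow E k *v (M *v v)) \<bullet> (matpow E k *v (M *v v))))"
    by (simp only: q_def square)
  also have "\<dots> = q v + 2 * h * (\<Sum>k<K. (matpow E k *v v) \<bullet> (matpow E k *v (M *v v))) + h\<^sup>2 * q (M *v v)"
    by (simp add: q_def sum.distrib sum_distrib_left)
  finally have expand: "q (E *v v) = q v + 2 * h * (\<Sum>k<K. (matpow E k *v v) \<bullet> (matpow E k *v (M *v v)))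
      + h\<^sup>2 * q (M *v v)" .
  have "g K \<le> (v \<bullet> v) / 4"
  proof -
    have "(norm (matpow E K *v v))\<^sup>2 \<le> (norm v / 2)\<^sup>2"
      using contraction by (intro power_mono) auto
    then show ?thesis by (simp add: g_def power2_norm_eq_inner power_divide)
  qed
  moreover have "0 \<le> h\<^sup>2 * q (M *v v)"
    unfolding q_def by (intro mult_nonneg_nonneg sum_nonneg) simp_all
  ultimately have "2 * h * (\<Sum>k<K. (matpow E k *v v) \<bullet> (matpow E k *v (M *v v))) \<le> - (v \<bullet> v) / 2"
    using telescope expand inner_ge_zero[of v] by linarith
  then show ?thesis
    using \<open>h > 0\<close> by (simp add: field_simps)
qed

lemma has_real_derivative_sum_inner_matpow_mat_exp_vec:
  fixes E M :: "real^'n^'n" and x :: "real^'n"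
  defines "y \<equiv> \<lambda>t. mat_exp_vec M t x"
  shows "((\<lambda>t. \<Sum>k<K. (matpow E k *v y t) \<bullet> (matpow E k *v y t)) has_real_derivative
           2 * (\<Sum>k<K. (matpow E k *v y t) \<bullet> (matpow E k *v (M *v y t)))) (at t)"
proof -
  have "((\<lambda>t. matpow E k *v y t) has_vector_derivative matpow E k *v (M *v y t)) (at t)" for k
    unfolding y_def
    by (rule bounded_linear.has_vector_derivative[OF matrix_vector_mul_bounded_linear
          has_vector_derivative_mat_exp_vec_at])
  then have "((\<lambda>t. \<Sum>k<K. (matpow E k *v y t) \<bullet> (matpow E k *v y t)) has_vector_derivative
      (\<Sum>k<K. (matpow E k *v y t) \<bullet> (matpow E k *v (M *v y t))
        + (matpow E k *v (M *v y t)) \<bullet> (matpow E k *v y t))) (at t)"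
    by (intro has_vector_derivative_sum bounded_bilinear.has_vector_derivative[OF bounded_bilinear_inner])
  then show ?thesis
    by (simp add: has_real_derivative_iff_has_vector_derivative inner_commute sum.distrib
        sum_distrib_left)
qed

lemma mat_exp_vec_eventually_small:
  fixes M :: "real^'n^'n"
  assumes "h > 0" and contraction: "\<And>v. norm (matpow (mat 1 + h *\<^sub>R M) K *v v) \<le> norm v / 2"
    and "\<epsilon> > 0"
  shows "\<exists>t\<ge>0. norm (mat_exp_vec M t x) \<le> \<epsilon>"
proof (rule ccontr)
  \<comment> \<open>Along the flow, \<open>q = (\<Sum>k<K. |E\<^sup>k y|\<^sup>2)\<close> decreases at rate at least \<open>|y|\<^sup>2 / (2 h)\<close>.\<close>
  assume "\<not> ?thesis"
  then have large: "\<epsilon> < norm (mat_exp_vec M t x)" if "t \<ge> 0" for t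
    using that by auto
  define E where "E = mat 1 + h *\<^sub>R M"
  define y where "y t = mat_exp_vec M t x" for t
  define q where "q w = (\<Sum>k<K. (matpow E k *v w) \<bullet> (matpow E k *v w))" for w
  define q' where "q' t = 2 * (\<Sum>k<K. (matpow E k *v y t) \<bullet> (matpow E k *v (M *v y t)))" for t
  have q_nonneg: "0 \<le> q w" for w
    unfolding q_def by (intro sum_nonneg) simp
  have dq: "((\<lambda>t. q (y t)) has_real_derivative q' t) (at t)" for t
    unfolding q_def q'_def y_def by (rule has_real_derivative_sum_inner_matpow_mat_exp_vec)
  have q'_le: "q' t \<le> - \<epsilon>\<^sup>2 / (2 * h)" if "t \<ge> 0" for t
  proof -
    have "\<epsilon>\<^sup>2 < (norm (y t))\<^sup>2"
      using large[OF that] \<open>\<epsilon> > 0\<close> by (intro power_strict_mono) (auto simp: y_def)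
    then have "- (y t \<bullet> y t) / (4 * h) \<le> - \<epsilon>\<^sup>2 / (4 * h)"
      using \<open>h > 0\<close> by (simp add: power2_norm_eq_inner divide_simps)
    then show ?thesis
      using euler_lyapunov_cross_sum_le[OF \<open>h > 0\<close> contraction, of "y t"] \<open>h > 0\<close>
      by (simp add: q'_def E_def field_simps)
  qed
  define T where "T = 2 * h * q (y 0) / \<epsilon>\<^sup>2 + 1"
  have "0 \<le> 2 * h * q (y 0) / \<epsilon>\<^sup>2"
    using \<open>h > 0\<close> q_nonneg[of "y 0"] by simp
  then have "T > 0" by (simp add: T_def)
  have "q (y T) + T * \<epsilon>\<^sup>2 / (2 * h) \<le> q (y 0) + 0 * \<epsilon>\<^sup>2 / (2 * h)"
  proof (rule DERIV_nonpos_imp_decreasing_open[of 0 T "\<lambda>t. q (y t) + t * \<epsilon>\<^sup>2 / (2 * h)"])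
    have deriv: "((\<lambda>t. q (y t) + t * \<epsilon>\<^sup>2 / (2 * h)) has_real_derivative q' t + \<epsilon>\<^sup>2 / (2 * h)) (at t)"
      for t
      using \<open>h > 0\<close> by (auto intro!: derivative_eq_intros dq)
    then show "continuous_on {0..T} (\<lambda>t. q (y t) + t * \<epsilon>\<^sup>2 / (2 * h))"
      by (intro continuous_at_imp_continuous_on) (auto intro: DERIV_isCont)
    show "\<exists>d. ((\<lambda>t. q (y t) + t * \<epsilon>\<^sup>2 / (2 * h)) has_real_derivative d) (at t) \<and> d \<le> 0"
      if "0 < t" "t < T" for t
      using deriv q'_le[of t] that by (intro exI conjI) (assumption, simp)
  qed (use \<open>T > 0\<close> in simp)
  also have "\<dots> = T * \<epsilon>\<^sup>2 / (2 * h) - \<epsilon>\<^sup>2 / (2 * h)"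
    using \<open>h > 0\<close> \<open>\<epsilon> > 0\<close> by (simp add: T_def field_simps)
  finally have "q (y T) + T * \<epsilon>\<^sup>2 / (2 * h) \<le> T * \<epsilon>\<^sup>2 / (2 * h) - \<epsilon>\<^sup>2 / (2 * h)" .
  moreover have "0 < \<epsilon>\<^sup>2 / (2 * h)"
    using \<open>h > 0\<close> \<open>\<epsilon> > 0\<close> by simp
  ultimately show False
    using q_nonneg[of "y T"] by linarith
qed

section \<open>Steering with controls in a subspace\<close>

text \<open>\<open>steers M V z y\<close>: by variation of constants, the control \<open>z\<close> drives \<open>x' = M x + z\<close>
  from \<open>-y\<close> to \<open>0\<close> in unit time.\<close>

definition steers :: "real^'n^'n \<Rightarrow> (real^'n) set \<Rightarrow> (real \<Rightarrow> real^'n) \<Rightarrow> real^'n \<Rightarrow> bool" where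
  "steers M V z y \<longleftrightarrow> continuous_on UNIV z \<and> (\<forall>s. z s \<in> V) \<and> (\<forall>s. s \<notin> {0<..<1} \<longrightarrow> z s = 0)
     \<and> ((\<lambda>s. mat_exp_vec M (-s) (z s)) has_integral y) {0..1}"

lemma steers_zero: "subspace V \<Longrightarrow> steers M V (\<lambda>s. 0) 0"
  by (simp add: steers_def mat_exp_vec_zero subspace_0)

lemma steers_add:
  "subspace V \<Longrightarrow> steers M V z1 y1 \<Longrightarrow> steers M V z2 y2 \<Longrightarrow> steers M V (\<lambda>s. z1 s + z2 s) (y1 + y2)"
  unfolding steers_def
  by (auto simp: mat_exp_vec_add subspace_add intro!: continuous_intros has_integral_add)

lemma steers_scaleR: "subspace V \<Longrightarrow> steers M V z y \<Longrightarrow> steers M V (\<lambda>s. c *\<^sub>R z s) (c *\<^sub>R y)"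
  unfolding steers_def
  by (auto simp: mat_exp_vec_scaleR subspace_scale intro!: continuous_intros has_integral_cmul)

lemma steers_sum:
  assumes "subspace V" "finite S" "\<And>j. j \<in> S \<Longrightarrow> steers M V (f j) (g j)"
  shows "steers M V (\<lambda>s. \<Sum>j\<in>S. f j s) (\<Sum>j\<in>S. g j)"
  using assms(2,3)
proof (induction S rule: finite_induct)
  case (insert a S)
  then have "steers M V (\<lambda>s. f a s + (\<Sum>j\<in>S. f j s)) (g a + (\<Sum>j\<in>S. g j))"
    by (intro steers_add[OF \<open>subspace V\<close>]) auto
  with insert show ?case by simp
qed (simp add: steers_zero[OF \<open>subspace V\<close>])

lemma subspace_steerable:
  assumes "subspace V"
  shows "subspace {y. \<exists>z. steers M V z y}"
  unfolding real_vector.subspace_def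
  using steers_zero[OF assms] steers_add[OF assms] steers_scaleR[OF assms] by blast

lemma orthogonal_steerable_imp_orthogonal_orbit:
  fixes M :: "real^'n^'n"
  assumes "subspace V" and orth: "\<And>z y. steers M V z y \<Longrightarrow> v \<bullet> y = 0"
    and "w \<in> V" and s: "s \<in> {0<..<1}"
  shows "v \<bullet> mat_exp_vec M (-s) w = 0"
proof -
  \<comment> \<open>Steer with \<open>z t = \<beta> t \<phi> t w\<close> for a bump \<open>\<beta>\<close> on \<open>(0,1)\<close> and \<open>\<phi> t = v \<bullet> e\<^sup>-\<^sup>t\<^sup>M w\<close>:
     then \<open>0 = v \<bullet> y = \<integral>\<^sub>0\<^sup>1 \<beta> \<phi>\<^sup>2\<close>, so \<open>\<phi>\<close> vanishes on \<open>(0,1)\<close>.\<close>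
  define \<beta> where "\<beta> t = max 0 (t * (1 - t))" for t :: real
  define \<phi> where "\<phi> t = v \<bullet> mat_exp_vec M (-t) w" for t
  define z where "z t = (\<beta> t * \<phi> t) *\<^sub>R w" for t
  have \<beta>_cont: "continuous_on S \<beta>" for S
    unfolding \<beta>_def by (intro continuous_intros)
  have \<phi>_cont: "continuous_on S \<phi>" for S
    unfolding \<phi>_def by (intro continuous_intros continuous_on_mat_exp_vec)
  have \<beta>_zero: "\<beta> t = 0" if "t \<notin> {0<..<1}" for t
    using that by (auto simp: \<beta>_def mult_le_0_iff not_less)
  have ez: "mat_exp_vec M (-t) (z t) = (\<beta> t * \<phi> t) *\<^sub>R mat_exp_vec M (-t) w" for t
    by (simp add: z_def mat_exp_vec_scaleR)
  have "continuous_on {0..1} (\<lambda>t. mat_exp_vec M (-t) (z t))"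
    unfolding ez by (intro continuous_intros \<beta>_cont \<phi>_cont continuous_on_mat_exp_vec)
  then obtain y where y: "((\<lambda>t. mat_exp_vec M (-t) (z t)) has_integral y) {0..1}"
    using integrable_continuous_interval by blast
  have "steers M V z y"
    unfolding steers_def
  proof (intro conjI allI impI y)
    show "continuous_on UNIV z"
      unfolding z_def by (intro continuous_intros \<beta>_cont \<phi>_cont)
    show "z t \<in> V" for t
      unfolding z_def by (rule subspace_scale[OF \<open>subspace V\<close> \<open>w \<in> V\<close>])
    show "z t = 0" if "t \<notin> {0<..<1}" for t
      using \<beta>_zero[OF that] by (simp add: z_def)
  qed
  then have "v \<bullet> y = 0" by (rule orth)
  moreover have "((\<lambda>t. v \<bullet> mat_exp_vec M (-t) (z t)) has_integral v \<bullet> y) {0..1}"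
    by (rule has_integral_linear[OF y bounded_linear_inner_right, unfolded o_def])
  ultimately have "((\<lambda>t. \<beta> t * (\<phi> t)\<^sup>2) has_integral 0) {0..1}"
    by (simp add: ez \<phi>_def power2_eq_square mult_ac)
  then have "integral {0..1} (\<lambda>t. \<beta> t * (\<phi> t)\<^sup>2) = 0"
    by (rule integral_unique)
  moreover have "continuous_on {0..1} (\<lambda>t. \<beta> t * (\<phi> t)\<^sup>2)"
    by (intro continuous_intros \<beta>_cont \<phi>_cont)
  ultimately have "\<forall>t\<in>{0..1}. \<beta> t * (\<phi> t)\<^sup>2 = 0"
    using integral_eq_0_iff by (simp add: \<beta>_def)
  then have "\<beta> s * (\<phi> s)\<^sup>2 = 0"
    using s by simp
  moreover have "\<beta> s > 0"
    using s by (simp add: \<beta>_def)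
  ultimately show ?thesis
    by (simp add: \<phi>_def)
qed

lemma orthogonal_orbit_imp_orthogonal_powers:
  fixes M :: "real^'n^'n"
  assumes orth: "\<And>w s. w \<in> V \<Longrightarrow> s \<in> {0<..<1} \<Longrightarrow> v \<bullet> mat_exp_vec M (-s) w = 0"
    and "w \<in> V" "s \<in> {0<..<1}"
  shows "v \<bullet> mat_exp_vec M (-s) (matpow M k *v w) = 0"
  using \<open>s \<in> {0<..<1}\<close>
proof (induction k arbitrary: s)
  case 0
  then show ?case using orth \<open>w \<in> V\<close> by simp
next
  case (Suc k)
  define u where "u = matpow M k *v w"
  have "((\<lambda>t. mat_exp_vec M t u) \<circ> uminus has_vector_derivative (-1) *\<^sub>R (M *v mat_exp_vec M (-s) u)) (at s)"
    by (rule vector_diff_chain_at) (auto intro!: derivative_eq_intros has_vector_derivative_mat_exp_vec_at)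
  from bounded_linear.has_vector_derivative[OF bounded_linear_inner_right this, of v]
  have "((\<lambda>t. v \<bullet> mat_exp_vec M (-t) u) has_real_derivative - (v \<bullet> (M *v mat_exp_vec M (-s) u))) (at s)"
    by (simp add: has_real_derivative_iff_has_vector_derivative o_def)
  then have "((\<lambda>t. 0) has_real_derivative - (v \<bullet> (M *v mat_exp_vec M (-s) u))) (at s)"
    by (rule has_field_derivative_transform_within_open[of _ _ _ "{0<..<1}"])
      (use Suc u_def in auto)
  moreover have "((\<lambda>t. 0) has_real_derivative 0) (at s)"
    by simp
  ultimately have "- (v \<bullet> (M *v mat_exp_vec M (-s) u)) = 0"
    by (rule DERIV_unique)
  then show ?case by (simp add: u_def mat_exp_vec_commute matrix_vector_mul_assoc[symmetric])
qed

lemma steerable_if_kalman_controllable: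
  fixes M :: "real^'n^'n"
  assumes "subspace V" and "kalman_controllable M V"
  shows "\<exists>z. steers M V z y"
proof -
  define R where "R = {y. \<exists>z. steers M V z y}"
  have "R = UNIV"
  proof (rule ccontr)
    assume "R \<noteq> UNIV"
    have "subspace R"
      unfolding R_def by (rule subspace_steerable[OF \<open>subspace V\<close>])
    then have "span R = R"
      by (simp add: span_eq_iff)
    with \<open>R \<noteq> UNIV\<close> have "span R \<noteq> UNIV"
      by (simp only: not_False_eq_True)
    then have "dim R < DIM(real^'n)"
      using dim_subset_UNIV[of R] dim_eq_full[of R] by linarith
    then obtain v :: "real^'n" where "v \<noteq> 0" and v_orth: "\<And>y. y \<in> span R \<Longrightarrow> orthogonal v y"
      by (rule orthogonal_to_subspace_exists) auto
    have "v \<bullet> y = 0" if "steers M V z y" for z y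
    proof -
      have "y \<in> span R"
        using that by (auto intro: span_base simp: R_def)
      then show ?thesis
        using v_orth by (simp add: Linear_Algebra.orthogonal_def)
    qed
    then have orth: "v \<bullet> mat_exp_vec M (-s) (matpow M k *v w) = 0"
      if "w \<in> V" "s \<in> {0<..<1}" for w s k
      using orthogonal_orbit_imp_orthogonal_powers[OF
          orthogonal_steerable_imp_orthogonal_orbit[OF \<open>subspace V\<close>] that] by blast
    have "linear (\<lambda>x. v \<bullet> mat_exp_vec M (-(1/2)) x)"
      by (rule linearI) (simp_all add: mat_exp_vec_add mat_exp_vec_scaleR inner_add_right)
    then have "v \<bullet> mat_exp_vec M (-(1/2)) x = 0" for x
    proof (rule linear_eq_0_on_span)
      show "x \<in> span (\<Union>k\<in>{..<CARD('n)}. ((\<lambda>x. M *v x) ^^ k) ` V)"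
        using \<open>kalman_controllable M V\<close> by (simp add: kalman_controllable_def)
    qed (use orth in \<open>auto simp: matpow_mult_vector[symmetric]\<close>)
    from this[of "mat_exp_vec M (1/2) v"] \<open>v \<noteq> 0\<close> show False
      by (simp add: mat_exp_vec_inverse)
  qed
  then show ?thesis by (auto simp: R_def)
qed

lemma steers_imp_bounded:
  assumes "steers M V z y"
  shows "\<exists>B\<ge>0. \<forall>s. norm (z s) \<le> B"
proof -
  have "compact (z ` {0..1})"
    using assms by (intro compact_continuous_image[OF continuous_on_subset[of UNIV]]) (auto simp: steers_def)
  then obtain B where B: "\<forall>x\<in>z ` {0..1}. norm x \<le> B"
    using compact_imp_bounded[of "z ` {0..1}"] unfolding bounded_iff by blast
  have "norm (z s) \<le> max B 0" for s
  proof (cases "s \<in> {0..1}")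
    case True
    then show ?thesis using B by (force simp: le_max_iff_disj)
  next
    case False
    then have "z s = 0" using assms by (auto simp: steers_def)
    then show ?thesis by simp
  qed
  then show ?thesis by (intro exI[of _ "max B 0"]) auto
qed

lemma steers_with_linear_bound:
  fixes M :: "real^'n^'n"
  assumes "subspace V" and "kalman_controllable M V"
  shows "\<exists>C\<ge>0. \<forall>y. \<exists>z. steers M V z y \<and> (\<forall>s. norm (z s) \<le> C * norm y)"
proof -
  have "\<exists>z B. steers M V z (axis j 1) \<and> B \<ge> 0 \<and> (\<forall>s. norm (z s) \<le> B)" for j :: 'n
    using steerable_if_kalman_controllable[OF assms] steers_imp_bounded by blast
  then obtain zb B where zb: "\<And>j. steers M V (zb j) (axis j 1)" and B_nonneg: "\<And>j. B j \<ge> 0"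
    and B: "\<And>j s. norm (zb j s) \<le> B j"
    by metis
  define C where "C = (\<Sum>j\<in>UNIV. B j)"
  have "\<exists>z. steers M V z y \<and> (\<forall>s. norm (z s) \<le> C * norm y)" for y
  proof (intro exI conjI allI)
    have "steers M V (\<lambda>s. \<Sum>j\<in>UNIV. (y $ j) *\<^sub>R zb j s) (\<Sum>j\<in>UNIV. (y $ j) *\<^sub>R axis j 1)"
      by (rule steers_sum[OF \<open>subspace V\<close>]) (auto intro: steers_scaleR[OF \<open>subspace V\<close> zb])
    moreover have "(\<Sum>j\<in>UNIV. (y $ j) *\<^sub>R axis j 1) = y"
      using basis_expansion[of y] by (simp add: scalar_mult_eq_scaleR)
    ultimately show "steers M V (\<lambda>s. \<Sum>j\<in>UNIV. (y $ j) *\<^sub>R zb j s) y"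
      by simp
    fix s
    have "norm (\<Sum>j\<in>UNIV. (y $ j) *\<^sub>R zb j s) \<le> (\<Sum>j\<in>UNIV. norm ((y $ j) *\<^sub>R zb j s))"
      by (rule norm_sum)
    also have "\<dots> \<le> (\<Sum>j\<in>UNIV. norm y * B j)"
    proof (rule sum_mono)
      fix j
      have "\<bar>y $ j\<bar> * norm (zb j s) \<le> norm y * B j"
        by (rule mult_mono[OF component_le_norm_cart B]) auto
      then show "norm ((y $ j) *\<^sub>R zb j s) \<le> norm y * B j" by simp
    qed
    also have "\<dots> = C * norm y"
      by (simp add: C_def sum_distrib_left mult.commute)
    finally show "norm (\<Sum>j\<in>UNIV. (y $ j) *\<^sub>R zb j s) \<le> C * norm y" .
  qed
  moreover have "C \<ge> 0"
    by (simp add: C_def sum_nonneg B_nonneg)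
  ultimately show ?thesis by blast
qed

definition forced_solution :: "real^'n^'n \<Rightarrow> (real \<Rightarrow> real^'n) \<Rightarrow> real^'n \<Rightarrow> real \<Rightarrow> real^'n" where
  "forced_solution M z x0 t = mat_exp_vec M t (x0 + integral {0..t} (\<lambda>s. mat_exp_vec M (-s) (z s)))"

lemma forced_solution_0: "forced_solution M z x0 0 = x0"
  by (simp add: forced_solution_def mat_exp_vec_0)

lemma has_vector_derivative_forced_solution:
  fixes M :: "real^'n^'n"
  assumes "continuous_on UNIV z" and t: "t \<in> {0..T}"
  shows "(forced_solution M z x0 has_vector_derivative (M *v forced_solution M z x0 t + z t))
           (at t within {0..T})"
proof -
  have "continuous_on {0..T} (\<lambda>s. mat_exp_vec M (-s) (z s))"
    by (intro continuous_on_mat_exp_vec continuous_intros continuous_on_subset[OF assms(1)]) auto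
  then have "((\<lambda>u. integral {0..u} (\<lambda>s. mat_exp_vec M (-s) (z s))) has_vector_derivative
      mat_exp_vec M (-t) (z t)) (at t within {0..T})"
    by (rule integral_has_vector_derivative[OF _ t])
  then have "((\<lambda>u. x0 + integral {0..u} (\<lambda>s. mat_exp_vec M (-s) (z s))) has_vector_derivative
      mat_exp_vec M (-t) (z t)) (at t within {0..T})"
    using has_vector_derivative_add[OF has_vector_derivative_const[of x0]] by simp
  from has_vector_derivative_mat_exp_vec_comp[OF this, of M]
  show ?thesis by (simp add: forced_solution_def[abs_def] mat_exp_vec_inverse')
qed

lemma forced_solution_has_integral:
  fixes M :: "real^'n^'n"
  assumes "continuous_on UNIV z" and "0 \<le> t"
  shows "((\<lambda>s. M *v forced_solution M z x0 s + z s) has_integral (forced_solution M z x0 t - x0)) {0..t}"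
  using fundamental_theorem_of_calculus[OF assms(2) has_vector_derivative_forced_solution[OF assms(1)]]
  by (simp add: forced_solution_0)

lemma forced_solution_steers_to_0:
  fixes M :: "real^'n^'n"
  assumes z: "steers M V z (- mat_exp_vec M \<tau> x0)" and "\<tau> \<ge> 0"
  shows "forced_solution M (\<lambda>s. z (s - \<tau>)) x0 (\<tau> + 1) = 0"
proof -
  have z_int: "((\<lambda>s. mat_exp_vec M (-s) (z s)) has_integral - mat_exp_vec M \<tau> x0) {0..1}"
    and z0: "\<And>s. s \<notin> {0<..<1} \<Longrightarrow> z s = 0"
    using z by (auto simp: steers_def)
  have "bounded_linear (mat_exp_vec M (-\<tau>))"
    using linear_mat_exp_vec linear_conv_bounded_linear by blast
  from has_integral_linear[OF z_int this]
  have "((\<lambda>u. mat_exp_vec M (-(u + \<tau>)) (z u)) has_integral - x0) {0..1}"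
    by (simp add: o_def mat_exp_vec_minus mat_exp_vec_inverse mat_exp_vec_add_time[symmetric] add.commute mat_exp_vec_0)
  from has_integral_shift_real_ivl[OF this, of "-\<tau>"]
  have "((\<lambda>s. mat_exp_vec M (-s) (z (s - \<tau>))) has_integral - x0) {\<tau>..\<tau> + 1}"
    by (simp add: add.commute)
  moreover have "((\<lambda>s. mat_exp_vec M (-s) (z (s - \<tau>))) has_integral 0) {0..\<tau>}"
  proof -
    have "((\<lambda>s. 0::real^'n) has_integral 0) {0..\<tau>}" by simp
    then show ?thesis
      by (rule has_integral_eq[rotated]) (auto simp: z0 mat_exp_vec_zero)
  qed
  ultimately have "((\<lambda>s. mat_exp_vec M (-s) (z (s - \<tau>))) has_integral (0 + - x0)) {0..\<tau> + 1}"
    using \<open>\<tau> \<ge> 0\<close> by (intro has_integral_combine) auto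
  then show ?thesis
    by (simp add: forced_solution_def integral_unique mat_exp_vec_zero)
qed

lemma small_control_to_origin:
  fixes M :: "real^'n^'n"
  assumes "subspace V" "kalman_controllable M V" "\<epsilon> > 0"
    and decay: "\<And>x r. r > 0 \<Longrightarrow> \<exists>t\<ge>0. norm (mat_exp_vec M t x) \<le> r"
  shows "\<exists>z T. continuous_on UNIV z \<and> (\<forall>s. z s \<in> V \<and> norm (z s) \<le> \<epsilon>) \<and> T \<ge> 0
           \<and> forced_solution M z x0 T = 0"
proof -
  \<comment> \<open>Let the free motion come within \<open>\<epsilon> / (C + 1)\<close> of the origin, then steer to it.\<close>
  obtain C where "C \<ge> 0" and C: "\<And>y. \<exists>z. steers M V z y \<and> (\<forall>s. norm (z s) \<le> C * norm y)"
    using steers_with_linear_bound[OF assms(1,2)] by blast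
  have "\<epsilon> / (C + 1) > 0"
    using \<open>\<epsilon> > 0\<close> \<open>C \<ge> 0\<close> by simp
  then obtain \<tau> where "\<tau> \<ge> 0" and \<tau>: "norm (mat_exp_vec M \<tau> x0) \<le> \<epsilon> / (C + 1)"
    using decay by blast
  obtain z where z: "steers M V z (- mat_exp_vec M \<tau> x0)"
    and z_le: "\<And>s. norm (z s) \<le> C * norm (mat_exp_vec M \<tau> x0)"
    using C[of "- mat_exp_vec M \<tau> x0"] by auto
  have z_cont: "continuous_on UNIV z" and z_V: "\<And>s. z s \<in> V"
    using z by (auto simp: steers_def)
  have "norm (z (s - \<tau>)) \<le> \<epsilon>" for s
  proof -
    have "norm (z (s - \<tau>)) \<le> C * norm (mat_exp_vec M \<tau> x0)"
      by (rule z_le)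
    also have "\<dots> \<le> C * (\<epsilon> / (C + 1))"
      using \<tau> \<open>C \<ge> 0\<close> by (rule mult_left_mono)
    also have "\<dots> \<le> \<epsilon>"
      using \<open>C \<ge> 0\<close> \<open>\<epsilon> > 0\<close> by (simp add: field_simps)
    finally show ?thesis .
  qed
  moreover have "continuous_on UNIV (\<lambda>s. z (s - \<tau>))"
    by (intro continuous_on_compose2[OF z_cont] continuous_intros) auto
  ultimately show ?thesis
    using forced_solution_steers_to_0[OF z \<open>\<tau> \<ge> 0\<close>] \<open>\<tau> \<ge> 0\<close> z_V
    by (intro exI[of _ "\<lambda>s. z (s - \<tau>)"] exI[of _ "\<tau> + 1"]) auto
qed

lemma linear_integral_equation_unique:
  fixes M :: "real^'n^'n" and g x y :: "real \<Rightarrow> real^'n"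
  assumes x: "\<And>t. t \<ge> 0 \<Longrightarrow> ((\<lambda>s. M *v x s + g s) has_integral (x t - x0)) {0..t}"
    and y: "\<And>t. t \<ge> 0 \<Longrightarrow> ((\<lambda>s. M *v y s + g s) has_integral (y t - x0)) {0..t}"
    and "T \<ge> 0"
  shows "y T = x T"
proof -
  define e where "e t = y t - x t" for t
  have e_int: "((\<lambda>s. M *v e s) has_integral e t) {0..t}" if "t \<ge> 0" for t
    using has_integral_diff[OF y[OF that] x[OF that]]
    by (simp add: e_def matrix_vector_mult_diff_distrib)
  have "((\<lambda>s. M *v e s) has_integral e 0) {0}"
    using e_int[of 0] by simp
  then have "e 0 = 0"
    using has_integral_refl(2) has_integral_unique by blast
  have e_eq: "e t = integral {0..t} (\<lambda>s. M *v e s)" if "t \<in> {0..T}" for t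
    using e_int[of t] that by (simp add: integral_unique)
  have "continuous_on {0..T} (\<lambda>t. integral {0..t} (\<lambda>s. M *v e s))"
    using e_int[OF \<open>T \<ge> 0\<close>] by (intro indefinite_integral_continuous_1) blast
  then have "continuous_on {0..T} e"
    by (rule continuous_on_eq) (simp add: e_eq)
  then have Me_cont: "continuous_on {0..T} (\<lambda>s. M *v e s)"
    by (intro continuous_on_compose2[OF bounded_linear.continuous_on[OF matrix_vector_mul_bounded_linear
          continuous_on_id]]) auto
  have "(e has_vector_derivative (M *v e t)) (at t within {0..T})" if t: "t \<in> {0..T}" for t
  proof -
    have "((\<lambda>u. integral {0..u} (\<lambda>s. M *v e s)) has_vector_derivative M *v e t) (at t within {0..T})"
      by (rule integral_has_vector_derivative[OF Me_cont t])
    then show ?thesis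
      by (rule has_vector_derivative_transform_within[of _ _ _ _ 1]) (use t e_eq in auto)
  qed
  then have "e T = 0"
    by (rule linear_ode_vanishes_forward[where T=T and M=M and y=e, OF \<open>T \<ge> 0\<close> _ \<open>e 0 = 0\<close>])
  then show ?thesis by (simp add: e_def)
qed

section \<open>Resilient stabilizability\<close>

lemma convex_minkowski_Z:
  assumes "convex U"
  shows "convex (minkowski_Z G H U W)"
proof (rule convexI)
  fix z1 z2 and a b :: real
  assume z: "z1 \<in> minkowski_Z G H U W" "z2 \<in> minkowski_Z G H U W"
    and "0 \<le> a" "0 \<le> b" "a + b = 1"
  show "a *\<^sub>R z1 + b *\<^sub>R z2 \<in> minkowski_Z G H U W"
    unfolding minkowski_Z_def
  proof (intro CollectI ballI)
    fix w assume "w \<in> W"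
    obtain u1 where u1: "u1 \<in> U" "z1 - H *v w = G *v u1"
      using z(1) \<open>w \<in> W\<close> by (auto simp: minkowski_Z_def)
    obtain u2 where u2: "u2 \<in> U" "z2 - H *v w = G *v u2"
      using z(2) \<open>w \<in> W\<close> by (auto simp: minkowski_Z_def)
    have "a *\<^sub>R (z1 - H *v w) + b *\<^sub>R (z2 - H *v w) = a *\<^sub>R z1 + b *\<^sub>R z2 - (a + b) *\<^sub>R (H *v w)"
      by (simp add: scaleR_diff_right scaleR_add_left)
    then have "a *\<^sub>R z1 + b *\<^sub>R z2 - H *v w = a *\<^sub>R (z1 - H *v w) + b *\<^sub>R (z2 - H *v w)"
      using \<open>a + b = 1\<close> by simp
    also have "\<dots> = G *v (a *\<^sub>R u1 + b *\<^sub>R u2)"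
      by (simp add: u1 u2 matrix_vector_right_distrib matrix_vector_mult_scaleR)
    finally show "a *\<^sub>R z1 + b *\<^sub>R z2 - H *v w \<in> (\<lambda>u. G *v u) ` U"
      using convexD[OF \<open>convex U\<close> u1(1) u2(1) \<open>0 \<le> a\<close> \<open>0 \<le> b\<close> \<open>a + b = 1\<close>] by blast
  qed
qed

lemma minkowski_Z_uminus:
  assumes "\<And>u. u \<in> U \<Longrightarrow> -u \<in> U" and "\<And>w. w \<in> W \<Longrightarrow> -w \<in> W"
    and "z \<in> minkowski_Z G H U W"
  shows "-z \<in> minkowski_Z G H U W"
  unfolding minkowski_Z_def
proof (intro CollectI ballI)
  fix w assume "w \<in> W"
  then obtain u where "u \<in> U" and u: "z - H *v (-w) = G *v u"
    using assms(2,3) by (auto simp: minkowski_Z_def)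
  then have "-z - H *v w = G *v (-u)"
    by (simp add: matrix_vector_mult_diff_distrib[of _ 0, simplified] algebra_simps)
  then show "-z - H *v w \<in> (\<lambda>u. G *v u) ` U"
    using assms(1)[OF \<open>u \<in> U\<close>] by blast
qed

lemma symmetric_convex_contains_relative_ball:
  fixes Z :: "(real^'n) set"
  assumes "convex Z" and sym: "\<And>z. z \<in> Z \<Longrightarrow> -z \<in> Z" and "Z \<noteq> {}"
  shows "\<exists>e>0. \<forall>v\<in>span Z. norm v \<le> e \<longrightarrow> v \<in> Z"
proof -
  \<comment> \<open>\<open>0\<close> is in the relative interior as the midpoint of \<open>p\<close> and \<open>-p\<close> for any \<open>p\<close> there.\<close>
  obtain z0 where "z0 \<in> Z" using \<open>Z \<noteq> {}\<close> by auto
  have "(1/2::real) *\<^sub>R z0 + (1/2::real) *\<^sub>R (-z0) \<in> Z"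
    by (rule convexD[OF \<open>convex Z\<close> \<open>z0 \<in> Z\<close> sym[OF \<open>z0 \<in> Z\<close>]]) auto
  then have "affine hull Z = span Z"
    by (intro affine_hull_span_0 hull_inc) simp
  obtain p where p: "p \<in> rel_interior Z"
    using rel_interior_eq_empty[OF \<open>convex Z\<close>] \<open>Z \<noteq> {}\<close> by auto
  then obtain e where "e > 0" and e: "ball p e \<inter> span Z \<subseteq> Z" and "p \<in> Z"
    unfolding mem_rel_interior_ball \<open>affine hull Z = span Z\<close> by auto
  have "-p \<in> rel_interior Z"
    unfolding mem_rel_interior_ball \<open>affine hull Z = span Z\<close>
  proof (intro conjI exI[of _ e] sym \<open>p \<in> Z\<close> \<open>e > 0\<close> subsetI)
    fix x assume x: "x \<in> ball (-p) e \<inter> span Z"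
    then have "-x \<in> ball p e \<inter> span Z"
      by (simp add: dist_norm norm_minus_commute add.commute span_neg)
    with e sym show "x \<in> Z" by force
  qed
  have "(1/2::real) *\<^sub>R p + (1/2::real) *\<^sub>R (-p) \<in> rel_interior Z"
    by (rule convexD[OF convex_rel_interior[OF \<open>convex Z\<close>] p \<open>-p \<in> rel_interior Z\<close>]) auto
  then obtain e0 where "e0 > 0" and e0: "ball 0 e0 \<inter> span Z \<subseteq> Z"
    unfolding mem_rel_interior_ball \<open>affine hull Z = span Z\<close> by auto
  have "v \<in> Z" if "v \<in> span Z" "norm v \<le> e0 / 2" for v
    using that \<open>e0 > 0\<close> e0 by auto
  then show ?thesis
    using \<open>e0 > 0\<close> by (intro exI[of _ "e0 / 2"]) auto
qed

lemma resiliently_stabilizable_if_null_controllable_in_Z: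
  fixes M :: "real^'n^'n" and G :: "real^'u^'n" and H :: "real^'w^'n"
  assumes "\<And>x0. \<exists>z T. continuous_on UNIV z \<and> (\<forall>s. z s \<in> minkowski_Z G H U W) \<and> T \<ge> 0
                     \<and> forced_solution M z x0 T = 0"
  shows "resiliently_stabilizable M G H U W"
  unfolding resiliently_stabilizable_def
proof (intro allI)
  \<comment> \<open>Pick \<open>f t w \<in> U\<close> with \<open>G f t w = z t - H w\<close>; then \<open>G f t w + H w = z t\<close> whatever \<open>w\<close> is.\<close>
  fix x0
  obtain z T where "continuous_on UNIV z" and z: "\<And>s. z s \<in> minkowski_Z G H U W"
    and "T \<ge> 0" and "forced_solution M z x0 T = 0"
    using assms by blast
  define f where "f t w = (SOME u. u \<in> U \<and> G *v u = z t - H *v w)" for t w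
  have f: "f t w \<in> U \<and> G *v f t w = z t - H *v w" if "w \<in> W" for t w
  proof -
    have "z t - H *v w \<in> (\<lambda>u. G *v u) ` U"
      using z[of t] that by (simp add: minkowski_Z_def)
    then have "\<exists>u. u \<in> U \<and> G *v u = z t - H *v w"
      by auto
    then show ?thesis unfolding f_def by (rule someI_ex)
  qed
  have "\<exists>T\<ge>0. \<exists>x. is_solution M G H (\<lambda>t. f t (w t)) w x0 x
          \<and> (\<forall>y. is_solution M G H (\<lambda>t. f t (w t)) w x0 y \<longrightarrow> (\<forall>t\<ge>0. y t = x t)) \<and> x T = 0"
    if w: "\<forall>t\<ge>0. w t \<in> W" for w
  proof -
    define x where "x = forced_solution M z x0"
    define g where "g s = G *v f s (w s) + H *v w s" for s
    have solution_iff: "is_solution M G H (\<lambda>t. f t (w t)) w x0 y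
        \<longleftrightarrow> (\<forall>t\<ge>0. ((\<lambda>s. M *v y s + g s) has_integral (y t - x0)) {0..t})" for y
      by (simp add: is_solution_def g_def add.assoc)
    have g: "g s = z s" if "s \<ge> 0" for s
      using f[of "w s" s] w that by (simp add: g_def)
    have x_int: "((\<lambda>s. M *v x s + g s) has_integral (x t - x0)) {0..t}" if "t \<ge> 0" for t
    proof -
      have "((\<lambda>s. M *v x s + z s) has_integral (x t - x0)) {0..t}"
        unfolding x_def by (rule forced_solution_has_integral[OF \<open>continuous_on UNIV z\<close> that])
      then show ?thesis
        by (rule has_integral_eq[rotated]) (simp add: g)
    qed
    have "y t = x t" if "is_solution M G H (\<lambda>t. f t (w t)) w x0 y" "t \<ge> 0" for y t
    proof -
      have "\<And>t. t \<ge> 0 \<Longrightarrow> ((\<lambda>s. M *v y s + g s) has_integral (y t - x0)) {0..t}"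
        using that(1) solution_iff by blast
      from linear_integral_equation_unique[OF x_int this \<open>t \<ge> 0\<close>] show ?thesis .
    qed
    moreover have "is_solution M G H (\<lambda>t. f t (w t)) w x0 x"
      using x_int solution_iff by blast
    ultimately show ?thesis
      using \<open>T \<ge> 0\<close> \<open>forced_solution M z x0 T = 0\<close> unfolding x_def by blast
  qed
  moreover have "\<forall>t\<ge>0. \<forall>w\<in>W. f t w \<in> U"
    using f by blast
  ultimately show "\<exists>f :: real \<Rightarrow> real^'w \<Rightarrow> real^'u. (\<forall>t\<ge>0. \<forall>w\<in>W. f t w \<in> U) \<and>
      (\<forall>w. (\<forall>t\<ge>0. w t \<in> W) \<longrightarrow>
         (\<exists>T\<ge>0. \<exists>x. is_solution M G H (\<lambda>t. f t (w t)) w x0 x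
             \<and> (\<forall>y. is_solution M G H (\<lambda>t. f t (w t)) w x0 y \<longrightarrow> (\<forall>t\<ge>0. y t = x t))
             \<and> x T = 0))"
    by blast
qed

lemma resiliently_stabilizable_if_hurwitz_controllable:
  fixes M :: "real^'n^'n" and G :: "real^'u^'n" and H :: "real^'w^'n"
  assumes "s > 0" and "\<And>c. complex_eigenvalue M c \<Longrightarrow> Re c \<le> -s"
    and controllable: "kalman_controllable M (span (minkowski_Z G H U W))"
    and "convex U" and "\<And>u. u \<in> U \<Longrightarrow> -u \<in> U" and "\<And>w. w \<in> W \<Longrightarrow> -w \<in> W"
  shows "resiliently_stabilizable M G H U W"
proof (rule resiliently_stabilizable_if_null_controllable_in_Z)
  fix x0
  define Z where "Z = minkowski_Z G H U W"
  have "Z \<noteq> {}"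
  proof
    assume "Z = {}"
    have "((\<lambda>x. M *v x) ^^ k) 0 = 0" for k
      using matpow_mult_vector[of M k 0] by simp
    with \<open>Z = {}\<close> have "(\<Union>k\<in>{..<CARD('n)}. ((\<lambda>x. M *v x) ^^ k) ` span Z) \<subseteq> {0}"
      by auto
    then have "span (\<Union>k\<in>{..<CARD('n)}. ((\<lambda>x. M *v x) ^^ k) ` span Z) \<subseteq> span {0}"
      by (rule span_mono)
    then have "(UNIV :: (real^'n) set) \<subseteq> {0}"
      using controllable by (simp add: Z_def kalman_controllable_def)
    moreover have "axis (undefined :: 'n) (1 :: real) \<noteq> 0"
      by (simp add: axis_eq_0_iff)
    ultimately show False by blast
  qed
  have "convex Z"
    unfolding Z_def by (rule convex_minkowski_Z) fact
  moreover have "-z \<in> Z" if "z \<in> Z" for z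
    using assms(5,6) that unfolding Z_def by (rule minkowski_Z_uminus)
  ultimately have "\<exists>e>0. \<forall>v\<in>span Z. norm v \<le> e \<longrightarrow> v \<in> Z"
    using \<open>Z \<noteq> {}\<close> by (rule symmetric_convex_contains_relative_ball)
  then obtain \<epsilon> where "\<epsilon> > 0" and ball: "\<And>v. v \<in> span Z \<Longrightarrow> norm v \<le> \<epsilon> \<Longrightarrow> v \<in> Z"
    by blast
  obtain h K where "h > 0" and "\<And>x. norm (matpow (mat 1 + h *\<^sub>R M) K *v x) \<le> norm x / 2"
    using hurwitz_euler_step_contraction[OF assms(1,2)] by blast
  then have "\<exists>t\<ge>0. norm (mat_exp_vec M t x) \<le> r" if "r > 0" for x r
    using that by (rule mat_exp_vec_eventually_small)
  from small_control_to_origin[OF subspace_span controllable[folded Z_def] \<open>\<epsilon> > 0\<close> this]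
  obtain z T where "continuous_on UNIV z" "\<And>s. z s \<in> span Z" "\<And>s. norm (z s) \<le> \<epsilon>"
    "T \<ge> 0" "forced_solution M z x0 T = 0"
    by blast
  with ball show "\<exists>z T. continuous_on UNIV z \<and> (\<forall>s. z s \<in> minkowski_Z G H U W) \<and> T \<ge> 0
        \<and> forced_solution M z x0 T = 0"
    unfolding Z_def by blast
qed

lemma kalman_controllable_if_norm_lt_mu_Z:
  assumes "ereal (mat_norm D) < mu_Z A V"
  shows "kalman_controllable (A + D) V"
proof (rule ccontr)
  assume "\<not> kalman_controllable (A + D) V"
  then have "mu_Z A V \<le> ereal (mat_norm D)"
    unfolding mu_Z_def by (intro Inf_lower) auto
  with assms show False by simp
qed

lemma hurwitz_margin_if_norm_lt_r_R:
  fixes A D :: "real^'n^'n"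
  assumes "ereal (mat_norm D) < r_R A"
  shows "\<exists>s>0. \<forall>c. complex_eigenvalue (A + D) c \<longrightarrow> Re c \<le> -s"
proof -
  \<comment> \<open>An eigenvalue with \<open>Re c > -s\<close> would be moved into the right half plane by \<open>D + s I\<close>.\<close>
  obtain r where "mat_norm D < r" and "ereal r < r_R A"
    using ereal_dense2[OF assms] by auto
  define s where "s = r - mat_norm D"
  have "Re c \<le> -s" if "complex_eigenvalue (A + D) c" for c
  proof (rule ccontr)
    assume "\<not> Re c \<le> -s"
    moreover have "complex_eigenvalue (A + (D + s *\<^sub>R mat 1)) (c + of_real s)"
      using complex_eigenvalue_shift[OF that] by (simp add: add.assoc)
    ultimately have "r_R A \<le> ereal (mat_norm (D + s *\<^sub>R mat 1))"
      unfolding r_R_def complex_eigenvalue_def vector_scalar_mult_def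
      by (intro Inf_lower) force
    also have "mat_norm (D + s *\<^sub>R mat 1) \<le> r"
      using mat_norm_add_scaleR_id_le[of D s] \<open>mat_norm D < r\<close> by (simp add: s_def)
    finally show False
      using \<open>ereal r < r_R A\<close> by simp
  qed
  moreover have "s > 0"
    using \<open>mat_norm D < r\<close> by (simp add: s_def)
  ultimately show ?thesis by blast
qed

lemma convex_partial_unit_box:
  "convex {u :: real^'m. \<forall>j. (j \<notin> L \<longrightarrow> \<bar>u $ j\<bar> \<le> 1) \<and> (j \<in> L \<longrightarrow> u $ j = 0)}"
proof (rule convexI)
  fix x y :: "real^'m" and a b :: real
  assume x: "x \<in> {u. \<forall>j. (j \<notin> L \<longrightarrow> \<bar>u $ j\<bar> \<le> 1) \<and> (j \<in> L \<longrightarrow> u $ j = 0)}"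
    and y: "y \<in> {u. \<forall>j. (j \<notin> L \<longrightarrow> \<bar>u $ j\<bar> \<le> 1) \<and> (j \<in> L \<longrightarrow> u $ j = 0)}"
    and "0 \<le> a" "0 \<le> b" "a + b = 1"
  have "\<bar>a * x $ j + b * y $ j\<bar> \<le> 1" if "j \<notin> L" for j
  proof -
    have "\<bar>a * x $ j + b * y $ j\<bar> \<le> a * \<bar>x $ j\<bar> + b * \<bar>y $ j\<bar>"
      using \<open>0 \<le> a\<close> \<open>0 \<le> b\<close> by (metis abs_mult abs_of_nonneg abs_triangle_ineq)
    also have "\<dots> \<le> a * 1 + b * 1"
      using x y that \<open>0 \<le> a\<close> \<open>0 \<le> b\<close> by (intro add_mono mult_left_mono) auto
    finally show ?thesis using \<open>a + b = 1\<close> by simp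
  qed
  then show "a *\<^sub>R x + b *\<^sub>R y \<in> {u. \<forall>j. (j \<notin> L \<longrightarrow> \<bar>u $ j\<bar> \<le> 1) \<and> (j \<in> L \<longrightarrow> u $ j = 0)}"
    using x y by simp
qed

theorem proposition6:
  fixes N :: nat
    and sub :: "'n::finite \<Rightarrow> nat"
    and act :: "'m::finite \<Rightarrow> nat"
    and Nbr :: "nat \<Rightarrow> nat set"
    and A D :: "real^'n^'n"
    and Bbar :: "real^'m^'n"
    and L :: "'m set"
  assumes sub_range: "\<And>i. sub i \<in> {1..N}"
    and sub_nonempty: "\<And>k. k \<in> {1..N} \<Longrightarrow> \<exists>i. sub i = k"
    and act_range: "\<And>j. act j \<in> {1..N}"
    and Nbr_range: "\<And>k. k \<in> {1..N} \<Longrightarrow> Nbr k \<subseteq> {1..N} - {k}"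
    and A_blockdiag: "\<And>i j. sub i \<noteq> sub j \<Longrightarrow> A $ i $ j = 0"
    and D_struct: "\<And>i j. D $ i $ j \<noteq> 0 \<Longrightarrow> sub j \<in> Nbr (sub i)"
    and D_nonzero: "D \<noteq> 0"
    and Bbar_blockdiag: "\<And>i j. sub i \<noteq> act j \<Longrightarrow> Bbar $ i $ j = 0"
    and L_nonempty: "L \<noteq> {}"
    and L_sub: "L \<subseteq> {j. act j = N}"
  defines "B \<equiv> (\<chi> i j. if j \<in> L then 0 else Bbar $ i $ j)"
    and "C \<equiv> (\<chi> i j. if j \<in> L then Bbar $ i $ j else 0)"
    and "U \<equiv> {u :: real^'m. \<forall>j. (j \<notin> L \<longrightarrow> \<bar>u $ j\<bar> \<le> 1) \<and> (j \<in> L \<longrightarrow> u $ j = 0)}"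
    and "W \<equiv> {w :: real^'m. \<forall>j. (j \<in> L \<longrightarrow> \<bar>w $ j\<bar> \<le> 1) \<and> (j \<notin> L \<longrightarrow> w $ j = 0)}"
  assumes norm_small: "ereal (mat_norm D) < min (r_R A) (mu_Z A (span (minkowski_Z B C U W)))"
    and no_eigvec: "\<not> (\<exists>v :: real^'n. \<exists>l::real. v \<noteq> 0 \<and> transpose (A + D) *v v = l *\<^sub>R v
                          \<and> (\<forall>z\<in>minkowski_Z B C U W. v \<bullet> z \<le> 0))"
  shows "resiliently_stabilizable (A + D) B C U W"
proof -
  have controllable: "kalman_controllable (A + D) (span (minkowski_Z B C U W))"
    using norm_small by (intro kalman_controllable_if_norm_lt_mu_Z) simp
  obtain s where "s > 0" and "\<And>c. complex_eigenvalue (A + D) c \<Longrightarrow> Re c \<le> -s"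
    using hurwitz_margin_if_norm_lt_r_R[of D A] norm_small by auto
  moreover have "convex U"
    unfolding U_def by (rule convex_partial_unit_box)
  moreover have "-u \<in> U" if "u \<in> U" for u
    using that by (simp add: U_def)
  moreover have "-w \<in> W" if "w \<in> W" for w
    using that by (simp add: W_def)
  ultimately show ?thesis
    using controllable by (intro resiliently_stabilizable_if_hurwitz_controllable)
qed

end
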